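(* Let $R$ be an algebra over a field $\mathbb{F}$ with more than two elements. Then $R$ is of right invariant module type if and only if every indecomposable right $R$-module is automorphism-invariant.
   Context: Algebras are associative with identity; modules are unital right modules. $E(M)$ denotes the injective hull of $M$. A module $M$ is quasi-injective if every homomorphism from a submodule of $M$ to $M$ extends to an endomorphism of $M$. A module $M$ is automorphism-invariant if $\sigma(M)\subseteq M$ for every automorphism $\sigma$ of $E(M)$. A ring $R$ is of right invariant module type if every indecomposable right $R$-module is quasi-injective. *)

theory Defs
  imports "HOL-Algebra.Ring" "HOL-Algebra.RingHom"
begin

record ('r, 'm) rmod =
  mcarrier :: "'m set"
  madd :: "'m \<Rightarrow> 'm \<Rightarrow> 'm"
  mzero :: "'m"
  msmult :: "'m \<Rightarrow> 'r \<Rightarrow> 'm"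

definition add_monoid :: "('r, 'm) rmod \<Rightarrow> 'm monoid" where
  "add_monoid M = \<lparr>carrier = mcarrier M, mult = madd M, one = mzero M\<rparr>"

definition right_module :: "('r, 'c) ring_scheme \<Rightarrow> ('r, 'm) rmod \<Rightarrow> bool" where
  "right_module R M \<longleftrightarrow> ring R \<and> comm_group (add_monoid M) \<and>
     (\<forall>x\<in>mcarrier M. \<forall>r\<in>carrier R. msmult M x r \<in> mcarrier M) \<and>
     (\<forall>x\<in>mcarrier M. \<forall>r\<in>carrier R. \<forall>s\<in>carrier R.
        msmult M x (r \<oplus>\<^bsub>R\<^esub> s) = madd M (msmult M x r) (msmult M x s)) \<and>
     (\<forall>x\<in>mcarrier M. \<forall>y\<in>mcarrier M. \<forall>r\<in>carrier R.
        msmult M (madd M x y) r = madd M (msmult M x r) (msmult M y r)) \<and>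
     (\<forall>x\<in>mcarrier M. \<forall>r\<in>carrier R. \<forall>s\<in>carrier R.
        msmult M x (r \<otimes>\<^bsub>R\<^esub> s) = msmult M (msmult M x r) s) \<and>
     (\<forall>x\<in>mcarrier M. msmult M x \<one>\<^bsub>R\<^esub> = x)"

definition rsubmodule :: "('r, 'c) ring_scheme \<Rightarrow> ('r, 'm) rmod \<Rightarrow> 'm set \<Rightarrow> bool" where
  "rsubmodule R M N \<longleftrightarrow> N \<subseteq> mcarrier M \<and> mzero M \<in> N \<and>
     (\<forall>x\<in>N. \<forall>y\<in>N. madd M x y \<in> N) \<and>
     (\<forall>x\<in>N. \<forall>r\<in>carrier R. msmult M x r \<in> N)"

definition restr :: "('r, 'm) rmod \<Rightarrow> 'm set \<Rightarrow> ('r, 'm) rmod" where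
  "restr M N = M\<lparr>mcarrier := N\<rparr>"

definition rhom :: "('r, 'c) ring_scheme \<Rightarrow> ('r, 'm) rmod \<Rightarrow> ('r, 'n) rmod \<Rightarrow> ('m \<Rightarrow> 'n) \<Rightarrow> bool" where
  "rhom R A B f \<longleftrightarrow> f \<in> mcarrier A \<rightarrow> mcarrier B \<and>
     (\<forall>x\<in>mcarrier A. \<forall>y\<in>mcarrier A. f (madd A x y) = madd B (f x) (f y)) \<and>
     (\<forall>x\<in>mcarrier A. \<forall>r\<in>carrier R. f (msmult A x r) = msmult B (f x) r)"

definition quasi_injective :: "('r, 'c) ring_scheme \<Rightarrow> ('r, 'm) rmod \<Rightarrow> bool" where
  "quasi_injective R M \<longleftrightarrow> (\<forall>N f. rsubmodule R M N \<and> rhom R (restr M N) M f \<longrightarrow>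
      (\<exists>g. rhom R M M g \<and> (\<forall>x\<in>N. g x = f x)))"

definition indecomposable :: "('r, 'c) ring_scheme \<Rightarrow> ('r, 'm) rmod \<Rightarrow> bool" where
  "indecomposable R M \<longleftrightarrow> mcarrier M \<noteq> {mzero M} \<and>
     (\<forall>A B. rsubmodule R M A \<and> rsubmodule R M B \<and> A \<inter> B = {mzero M} \<and>
        {madd M a b | a b. a \<in> A \<and> b \<in> B} = mcarrier M \<longrightarrow>
        A = {mzero M} \<or> B = {mzero M})"

definition regular_module :: "('r, 'c) ring_scheme \<Rightarrow> ('r, 'r) rmod" where
  "regular_module R = \<lparr>mcarrier = carrier R, madd = add R, mzero = zero R, msmult = mult R\<rparr>"

text \<open>Injective module, via Baer's criterion (right ideals of R).\<close>
definition rinjective :: "('r, 'c) ring_scheme \<Rightarrow> ('r, 'e) rmod \<Rightarrow> bool" where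
  "rinjective R E \<longleftrightarrow> right_module R E \<and>
     (\<forall>I f. rsubmodule R (regular_module R) I \<and> rhom R (restr (regular_module R) I) E f \<longrightarrow>
        (\<exists>g. rhom R (regular_module R) E g \<and> (\<forall>x\<in>I. g x = f x)))"

definition essential :: "('r, 'c) ring_scheme \<Rightarrow> ('r, 'm) rmod \<Rightarrow> 'm set \<Rightarrow> bool" where
  "essential R M N \<longleftrightarrow> rsubmodule R M N \<and>
     (\<forall>K. rsubmodule R M K \<and> K \<noteq> {mzero M} \<longrightarrow> K \<inter> N \<noteq> {mzero M})"

definition injective_hull :: "('r, 'c) ring_scheme \<Rightarrow> ('r, 'm) rmod \<Rightarrow> ('r, 'e) rmod \<Rightarrow> ('m \<Rightarrow> 'e) \<Rightarrow> bool" where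
  "injective_hull R M E \<iota> \<longleftrightarrow> right_module R M \<and> rinjective R E \<and> rhom R M E \<iota> \<and>
     inj_on \<iota> (mcarrier M) \<and> essential R E (\<iota> ` mcarrier M)"

definition rautomorphism :: "('r, 'c) ring_scheme \<Rightarrow> ('r, 'e) rmod \<Rightarrow> ('e \<Rightarrow> 'e) \<Rightarrow> bool" where
  "rautomorphism R E \<sigma> \<longleftrightarrow> rhom R E E \<sigma> \<and> bij_betw \<sigma> (mcarrier E) (mcarrier E)"

definition aut_invariant :: "('r, 'c) ring_scheme \<Rightarrow> ('r, 'm) rmod \<Rightarrow> 'e itself \<Rightarrow> bool" where
  "aut_invariant R M (T :: 'e itself) \<longleftrightarrow>
     (\<forall>(E :: ('r, 'e) rmod) \<iota>. injective_hull R M E \<iota> \<longrightarrow>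
        (\<forall>\<sigma>. rautomorphism R E \<sigma> \<longrightarrow> \<sigma> ` (\<iota> ` mcarrier M) \<subseteq> \<iota> ` mcarrier M))"

definition right_invariant_module_type :: "('r, 'c) ring_scheme \<Rightarrow> 'm itself \<Rightarrow> bool" where
  "right_invariant_module_type R (T :: 'm itself) \<longleftrightarrow>
     (\<forall>M :: ('r, 'm) rmod. right_module R M \<and> indecomposable R M \<longrightarrow> quasi_injective R M)"

definition is_algebra_over :: "('f, 'a) ring_scheme \<Rightarrow> ('r, 'c) ring_scheme \<Rightarrow> ('f \<Rightarrow> 'r) \<Rightarrow> bool" where
  "is_algebra_over F R \<phi> \<longleftrightarrow> field F \<and> ring R \<and> \<phi> \<in> ring_hom F R \<and>
     (\<forall>a\<in>carrier F. \<forall>r\<in>carrier R. \<phi> a \<otimes>\<^bsub>R\<^esub> r = r \<otimes>\<^bsub>R\<^esub> \<phi> a)"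

end

theory Submission
  imports Defs
begin

text \<open>If \<open>M\<close> is quasi-injective, every endomorphism of \<open>E(M)\<close> maps \<open>M\<close> into itself, in
  particular every automorphism does. Conversely, let \<open>M\<close> be indecomposable and
  automorphism-invariant. A scalar \<open>\<lambda> \<in> F\<close> other than \<open>0\<close> and \<open>1\<close> gives a central unit
  \<open>t = \<lambda> - 1\<close> of \<open>R\<close> with \<open>1 + t\<close> also a unit. For an idempotent \<open>e\<close> of \<open>End(E)\<close>, the map
  \<open>x \<mapsto> x + e(x) t\<close> is an automorphism of \<open>E\<close>, so \<open>e(M) t \<subseteq> M\<close> and hence \<open>e(M) \<subseteq> M\<close>;
  since \<open>M\<close> is indecomposable and essential in \<open>E\<close>, \<open>e\<close> is \<open>0\<close> or \<open>1\<close>. An injective module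
  without nontrivial idempotents is uniform, so for every endomorphism \<open>h\<close> of \<open>E\<close> one of \<open>h\<close>
  and \<open>1 - h\<close> is injective and hence an automorphism. Either way \<open>h\<close> preserves \<open>M\<close>, and
  invariance under all endomorphisms of \<open>E\<close> makes \<open>M\<close> quasi-injective.\<close>

section \<open>Right modules and their homomorphisms\<close>

lemma add_monoid_simps [simp]:
  "carrier (add_monoid M) = mcarrier M" "mult (add_monoid M) = madd M" "one (add_monoid M) = mzero M"
  by (simp_all add: add_monoid_def)

lemma restr_simps [simp]:
  "mcarrier (restr M N) = N" "madd (restr M N) = madd M" "mzero (restr M N) = mzero M"
  "msmult (restr M N) = msmult M"
  by (simp_all add: restr_def)

lemma regular_module_simps [simp]:
  "mcarrier (regular_module R) = carrier R" "madd (regular_module R) = add R"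
  "mzero (regular_module R) = zero R" "msmult (regular_module R) = mult R"
  by (simp_all add: regular_module_def)

text \<open>The additive group of a module, packaged as a ring with zero multiplication so that
  the library's facts about abelian groups apply to it.\<close>

definition additive_group :: "('r, 'm) rmod \<Rightarrow> 'm ring" where
  "additive_group M = \<lparr>carrier = mcarrier M, mult = (\<lambda>x y. mzero M), one = mzero M,
     zero = mzero M, add = madd M\<rparr>"

lemma additive_group_simps [simp]:
  "carrier (additive_group M) = mcarrier M" "add (additive_group M) = madd M"
  "zero (additive_group M) = mzero M"
  by (simp_all add: additive_group_def)

abbreviation mneg :: "('r, 'm) rmod \<Rightarrow> 'm \<Rightarrow> 'm" where
  "mneg M x \<equiv> a_inv (additive_group M) x"

locale rmodule =
  fixes R :: "('r, 'c) ring_scheme" and M :: "('r, 'm) rmod"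
  assumes right_module: "right_module R M"
begin

sublocale ring R
  using right_module by (simp add: right_module_def)

sublocale A: abelian_group "additive_group M"
proof -
  interpret G: comm_group "add_monoid M"
    using right_module by (simp add: right_module_def)
  show "abelian_group (additive_group M)"
    by (rule abelian_groupI)
      (use G.m_closed G.one_closed G.m_assoc G.m_comm G.l_one G.l_inv_ex in auto)
qed

lemma smult_closed [simp, intro]: "x \<in> mcarrier M \<Longrightarrow> r \<in> carrier R \<Longrightarrow> msmult M x r \<in> mcarrier M"
  using right_module by (simp add: right_module_def)

lemma smult_distrib_scalar: "x \<in> mcarrier M \<Longrightarrow> r \<in> carrier R \<Longrightarrow> s \<in> carrier R \<Longrightarrow>
    msmult M x (r \<oplus>\<^bsub>R\<^esub> s) = madd M (msmult M x r) (msmult M x s)"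
  using right_module by (simp add: right_module_def)

lemma smult_distrib_vector: "x \<in> mcarrier M \<Longrightarrow> y \<in> mcarrier M \<Longrightarrow> r \<in> carrier R \<Longrightarrow>
    msmult M (madd M x y) r = madd M (msmult M x r) (msmult M y r)"
  using right_module by (simp add: right_module_def)

lemma smult_assoc: "x \<in> mcarrier M \<Longrightarrow> r \<in> carrier R \<Longrightarrow> s \<in> carrier R \<Longrightarrow>
    msmult M x (r \<otimes>\<^bsub>R\<^esub> s) = msmult M (msmult M x r) s"
  using right_module by (simp add: right_module_def)

lemma smult_one [simp]: "x \<in> mcarrier M \<Longrightarrow> msmult M x \<one>\<^bsub>R\<^esub> = x"
  using right_module by (simp add: right_module_def)

lemma add_closed [simp, intro]: "x \<in> mcarrier M \<Longrightarrow> y \<in> mcarrier M \<Longrightarrow> madd M x y \<in> mcarrier M"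
  using A.a_closed by simp

lemma zero_closed [simp, intro]: "mzero M \<in> mcarrier M"
  using A.zero_closed by simp

lemma neg_closed [simp, intro]: "x \<in> mcarrier M \<Longrightarrow> mneg M x \<in> mcarrier M"
  using A.a_inv_closed by simp

lemma add_assoc: "x \<in> mcarrier M \<Longrightarrow> y \<in> mcarrier M \<Longrightarrow> z \<in> mcarrier M \<Longrightarrow>
    madd M (madd M x y) z = madd M x (madd M y z)"
  using A.a_assoc[of x y z] by simp

lemma add_comm: "x \<in> mcarrier M \<Longrightarrow> y \<in> mcarrier M \<Longrightarrow> madd M x y = madd M y x"
  using A.a_comm[of x y] by simp

lemma add_lcomm: "x \<in> mcarrier M \<Longrightarrow> y \<in> mcarrier M \<Longrightarrow> z \<in> mcarrier M \<Longrightarrow>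
    madd M x (madd M y z) = madd M y (madd M x z)"
  using A.a_lcomm[of x y z] by simp

lemmas add_ac = add_assoc add_comm add_lcomm

lemma zero_add [simp]: "x \<in> mcarrier M \<Longrightarrow> madd M (mzero M) x = x"
  using A.l_zero[of x] by simp

lemma add_zero [simp]: "x \<in> mcarrier M \<Longrightarrow> madd M x (mzero M) = x"
  using A.r_zero[of x] by simp

lemma add_neg_right [simp]: "x \<in> mcarrier M \<Longrightarrow> madd M x (mneg M x) = mzero M"
  using A.r_neg[of x] by simp

lemma add_neg_left [simp]: "x \<in> mcarrier M \<Longrightarrow> madd M (mneg M x) x = mzero M"
  using A.l_neg[of x] by simp

lemma add_neg_cancel_left [simp]:
  "x \<in> mcarrier M \<Longrightarrow> y \<in> mcarrier M \<Longrightarrow> madd M x (madd M (mneg M x) y) = y"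
  by (simp add: add_assoc[symmetric])

lemma neg_add_cancel_left [simp]:
  "x \<in> mcarrier M \<Longrightarrow> y \<in> mcarrier M \<Longrightarrow> madd M (mneg M x) (madd M x y) = y"
  by (simp add: add_assoc[symmetric])

lemma neg_add_distrib: "x \<in> mcarrier M \<Longrightarrow> y \<in> mcarrier M \<Longrightarrow>
    mneg M (madd M x y) = madd M (mneg M x) (mneg M y)"
  using A.minus_add[of x y] by simp

lemma add_left_cancel_iff: "x \<in> mcarrier M \<Longrightarrow> y \<in> mcarrier M \<Longrightarrow> z \<in> mcarrier M \<Longrightarrow>
    madd M x y = madd M x z \<longleftrightarrow> y = z"
  by (metis neg_add_cancel_left)

lemma add_right_eq_self_iff: "x \<in> mcarrier M \<Longrightarrow> y \<in> mcarrier M \<Longrightarrow>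
    madd M x y = x \<longleftrightarrow> y = mzero M"
  using add_left_cancel_iff[of x y "mzero M"] by simp

lemma diff_eq_zero_iff: "x \<in> mcarrier M \<Longrightarrow> y \<in> mcarrier M \<Longrightarrow>
    madd M x (mneg M y) = mzero M \<longleftrightarrow> x = y"
  by (metis add_comm add_neg_left add_neg_cancel_left add_zero neg_closed)

lemma add_eq_zero_iff_eq_neg: "x \<in> mcarrier M \<Longrightarrow> y \<in> mcarrier M \<Longrightarrow>
    madd M x y = mzero M \<longleftrightarrow> y = mneg M x"
  using add_left_cancel_iff[of x y "mneg M x"] by simp

lemma neg_zero [simp]: "mneg M (mzero M) = mzero M"
  using add_eq_zero_iff_eq_neg[of "mzero M" "mzero M"] by simp

lemma add_eq_swap_iff:
  assumes "a \<in> mcarrier M" "b \<in> mcarrier M" "c \<in> mcarrier M" "d \<in> mcarrier M"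
  shows "madd M a b = madd M c d \<longleftrightarrow> madd M b (mneg M d) = madd M c (mneg M a)"
proof -
  have "madd M (madd M a b) (mneg M (madd M c d)) =
        madd M (madd M b (mneg M d)) (mneg M (madd M c (mneg M a)))"
    using assms by (simp add: neg_add_distrib add_ac)
  then show ?thesis
    using diff_eq_zero_iff[of "madd M a b" "madd M c d"]
      diff_eq_zero_iff[of "madd M b (mneg M d)" "madd M c (mneg M a)"] assms
    by simp
qed

lemma smult_zero_scalar [simp]: "x \<in> mcarrier M \<Longrightarrow> msmult M x \<zero>\<^bsub>R\<^esub> = mzero M"
  using smult_distrib_scalar[of x "\<zero>\<^bsub>R\<^esub>" "\<zero>\<^bsub>R\<^esub>"]
    add_right_eq_self_iff[of "msmult M x \<zero>\<^bsub>R\<^esub>" "msmult M x \<zero>\<^bsub>R\<^esub>"]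
  by simp

lemma smult_zero_vector [simp]: "r \<in> carrier R \<Longrightarrow> msmult M (mzero M) r = mzero M"
  using smult_distrib_vector[of "mzero M" "mzero M" r]
    add_right_eq_self_iff[of "msmult M (mzero M) r" "msmult M (mzero M) r"]
  by simp

lemma neg_eq_smult_minus_one: "x \<in> mcarrier M \<Longrightarrow> mneg M x = msmult M x (\<ominus>\<^bsub>R\<^esub> \<one>\<^bsub>R\<^esub>)"
  using smult_distrib_scalar[of x "\<one>\<^bsub>R\<^esub>" "\<ominus>\<^bsub>R\<^esub> \<one>\<^bsub>R\<^esub>"]
    add_eq_zero_iff_eq_neg[of x "msmult M x (\<ominus>\<^bsub>R\<^esub> \<one>\<^bsub>R\<^esub>)"]
  by (simp add: r_neg)

lemma smult_neg_vector: "x \<in> mcarrier M \<Longrightarrow> r \<in> carrier R \<Longrightarrow>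
    msmult M (mneg M x) r = mneg M (msmult M x r)"
  by (simp add: neg_eq_smult_minus_one smult_assoc[symmetric] l_minus r_minus)

lemma smult_neg_scalar: "x \<in> mcarrier M \<Longrightarrow> r \<in> carrier R \<Longrightarrow>
    msmult M x (\<ominus>\<^bsub>R\<^esub> r) = mneg M (msmult M x r)"
  by (simp add: neg_eq_smult_minus_one smult_assoc[symmetric] l_minus r_minus)

lemma smult_diff_scalar: "x \<in> mcarrier M \<Longrightarrow> r \<in> carrier R \<Longrightarrow> s \<in> carrier R \<Longrightarrow>
    msmult M x (r \<ominus>\<^bsub>R\<^esub> s) = madd M (msmult M x r) (mneg M (msmult M x s))"
  by (simp add: minus_eq smult_distrib_scalar smult_neg_scalar)


lemma submodule_subset: "rsubmodule R M N \<Longrightarrow> N \<subseteq> mcarrier M"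
  by (simp add: rsubmodule_def)

lemma submodule_mem: "rsubmodule R M N \<Longrightarrow> x \<in> N \<Longrightarrow> x \<in> mcarrier M"
  by (auto simp add: rsubmodule_def)

lemma submodule_zero: "rsubmodule R M N \<Longrightarrow> mzero M \<in> N"
  by (simp add: rsubmodule_def)

lemma submodule_add: "rsubmodule R M N \<Longrightarrow> x \<in> N \<Longrightarrow> y \<in> N \<Longrightarrow> madd M x y \<in> N"
  by (simp add: rsubmodule_def)

lemma submodule_smult: "rsubmodule R M N \<Longrightarrow> x \<in> N \<Longrightarrow> r \<in> carrier R \<Longrightarrow> msmult M x r \<in> N"
  by (simp add: rsubmodule_def)

lemma submodule_neg: "rsubmodule R M N \<Longrightarrow> x \<in> N \<Longrightarrow> mneg M x \<in> N"
  using neg_eq_smult_minus_one submodule_smult submodule_mem by simp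

lemma submodule_diff: "rsubmodule R M N \<Longrightarrow> x \<in> N \<Longrightarrow> y \<in> N \<Longrightarrow> madd M x (mneg M y) \<in> N"
  by (simp add: submodule_add submodule_neg)

lemma carrier_submodule: "rsubmodule R M (mcarrier M)"
  by (auto simp add: rsubmodule_def)

lemma submodule_sum:
  assumes A: "rsubmodule R M A" and B: "rsubmodule R M B"
  shows "rsubmodule R M {madd M a b | a b. a \<in> A \<and> b \<in> B}"
  unfolding rsubmodule_def
proof (intro conjI ballI)
  show "{madd M a b |a b. a \<in> A \<and> b \<in> B} \<subseteq> mcarrier M"
    using A B by (auto dest: submodule_mem)
  show "mzero M \<in> {madd M a b |a b. a \<in> A \<and> b \<in> B}"
    using submodule_zero[OF A] submodule_zero[OF B] by (intro CollectI exI[of _ "mzero M"]) simp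
next
  fix x y assume "x \<in> {madd M a b |a b. a \<in> A \<and> b \<in> B}" "y \<in> {madd M a b |a b. a \<in> A \<and> b \<in> B}"
  then obtain a b a' b' where ab: "a \<in> A" "b \<in> B" "x = madd M a b" "a' \<in> A" "b' \<in> B" "y = madd M a' b'"
    by blast
  then have "madd M x y = madd M (madd M a a') (madd M b b')"
    using A B by (simp add: submodule_mem add_ac)
  then show "madd M x y \<in> {madd M a b |a b. a \<in> A \<and> b \<in> B}"
    using ab A B submodule_add by blast
next
  fix x r assume "x \<in> {madd M a b |a b. a \<in> A \<and> b \<in> B}" "r \<in> carrier R"
  then obtain a b where ab: "a \<in> A" "b \<in> B" "x = madd M a b" and r: "r \<in> carrier R"
    by blast
  then have "msmult M x r = madd M (msmult M a r) (msmult M b r)"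
    using A B by (simp add: submodule_mem smult_distrib_vector)
  then show "msmult M x r \<in> {madd M a b |a b. a \<in> A \<and> b \<in> B}"
    using ab A B submodule_smult r by blast
qed

lemma submodule_chain_Union:
  assumes "C \<noteq> {}" "\<forall>N\<in>C. rsubmodule R M N" "\<forall>A\<in>C. \<forall>B\<in>C. A \<subseteq> B \<or> B \<subseteq> A"
  shows "rsubmodule R M (\<Union>C)"
  unfolding rsubmodule_def
proof (intro conjI ballI)
  show "\<Union> C \<subseteq> mcarrier M" using assms(2) submodule_subset by blast
  show "mzero M \<in> \<Union> C" using assms(1,2) submodule_zero by blast
next
  fix x y assume "x \<in> \<Union>C" "y \<in> \<Union>C"
  then obtain A B where "A \<in> C" "B \<in> C" "x \<in> A" "y \<in> B" by blast
  then show "madd M x y \<in> \<Union>C" using assms(2,3) submodule_add by (metis UnionI subsetD)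
next
  fix x r assume "x \<in> \<Union>C" "r \<in> carrier R"
  then show "msmult M x r \<in> \<Union>C" using assms(2) submodule_smult by blast
qed

lemma restr_right_module:
  assumes N: "rsubmodule R M N"
  shows "right_module R (restr M N)"
proof -
  have "comm_group (add_monoid (restr M N))"
  proof (rule comm_groupI)
    fix x assume x: "x \<in> carrier (add_monoid (restr M N))"
    show "\<exists>y\<in>carrier (add_monoid (restr M N)). y \<otimes>\<^bsub>add_monoid (restr M N)\<^esub> x = \<one>\<^bsub>add_monoid (restr M N)\<^esub>"
      using x submodule_mem[OF N] submodule_neg[OF N] by (intro bexI[of _ "mneg M x"]) auto
  qed (use N submodule_mem[OF N] in \<open>auto simp: submodule_add submodule_zero add_ac\<close>)
  then show ?thesis unfolding right_module_def
    using N submodule_mem[OF N] submodule_smult[OF N] smult_distrib_scalar smult_distrib_vector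
      smult_assoc
    by (simp add: ring_axioms)
qed

end

locale module_hom = M: rmodule R M + N: rmodule R N
  for R :: "('r, 'c) ring_scheme" and M :: "('r, 'm) rmod" and N :: "('r, 'n) rmod" +
  fixes f assumes hom: "rhom R M N f"
begin

lemma hom_closed [simp, intro]: "x \<in> mcarrier M \<Longrightarrow> f x \<in> mcarrier N"
  using hom by (auto simp: rhom_def)

lemma hom_add: "x \<in> mcarrier M \<Longrightarrow> y \<in> mcarrier M \<Longrightarrow> f (madd M x y) = madd N (f x) (f y)"
  using hom by (auto simp: rhom_def)

lemma hom_smult: "x \<in> mcarrier M \<Longrightarrow> r \<in> carrier R \<Longrightarrow> f (msmult M x r) = msmult N (f x) r"
  using hom by (auto simp: rhom_def)

lemma hom_zero [simp]: "f (mzero M) = mzero N"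
  using hom_smult[of "mzero M" "\<zero>\<^bsub>R\<^esub>"] by simp

lemma hom_neg: "x \<in> mcarrier M \<Longrightarrow> f (mneg M x) = mneg N (f x)"
  using hom_smult[of x "\<ominus>\<^bsub>R\<^esub> \<one>\<^bsub>R\<^esub>"] M.neg_eq_smult_minus_one N.neg_eq_smult_minus_one by simp

lemma hom_diff: "x \<in> mcarrier M \<Longrightarrow> y \<in> mcarrier M \<Longrightarrow>
    f (madd M x (mneg M y)) = madd N (f x) (mneg N (f y))"
  by (simp add: hom_add hom_neg)

lemma kernel_submodule: "rsubmodule R M {x \<in> mcarrier M. f x = mzero N}"
  unfolding rsubmodule_def by (auto simp: hom_add hom_smult)

lemma vimage_submodule: "rsubmodule R N S \<Longrightarrow> rsubmodule R M {x \<in> mcarrier M. f x \<in> S}"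
  unfolding rsubmodule_def by (auto simp: hom_add hom_smult)

lemma image_submodule:
  assumes S: "rsubmodule R M S"
  shows "rsubmodule R N (f ` S)"
  unfolding rsubmodule_def
proof (intro conjI ballI)
  show "f ` S \<subseteq> mcarrier N" using M.submodule_mem[OF S] by auto
  show "mzero N \<in> f ` S" using M.submodule_zero[OF S] hom_zero by force
next
  fix x y assume "x \<in> f ` S" "y \<in> f ` S"
  then obtain a b where "a \<in> S" "b \<in> S" "x = f a" "y = f b" by blast
  then show "madd N x y \<in> f ` S"
    using M.submodule_add[OF S] M.submodule_mem[OF S] hom_add by (metis image_eqI)
next
  fix x r assume "x \<in> f ` S" "r \<in> carrier R"
  then obtain a where "a \<in> S" "x = f a" "r \<in> carrier R" by blast
  then show "msmult N x r \<in> f ` S"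
    using M.submodule_smult[OF S] M.submodule_mem[OF S] hom_smult by (metis image_eqI)
qed

lemma range_submodule: "rsubmodule R N (f ` mcarrier M)"
  by (rule image_submodule[OF M.carrier_submodule])

lemma inj_on_iff_kernel_trivial:
  "inj_on f (mcarrier M) \<longleftrightarrow> (\<forall>x\<in>mcarrier M. f x = mzero N \<longrightarrow> x = mzero M)"
proof
  assume "inj_on f (mcarrier M)"
  then show "\<forall>x\<in>mcarrier M. f x = mzero N \<longrightarrow> x = mzero M"
    by (metis M.zero_closed hom_zero inj_on_def)
next
  assume ker: "\<forall>x\<in>mcarrier M. f x = mzero N \<longrightarrow> x = mzero M"
  show "inj_on f (mcarrier M)"
  proof (rule inj_onI)
    fix x y assume xy: "x \<in> mcarrier M" "y \<in> mcarrier M" "f x = f y"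
    then have "f (madd M x (mneg M y)) = mzero N" by (simp add: hom_diff)
    then have "madd M x (mneg M y) = mzero M" using ker xy by simp
    then show "x = y" using xy M.diff_eq_zero_iff by simp
  qed
qed

lemma rhom_inv_into:
  assumes inj: "inj_on f (mcarrier M)"
  shows "rhom R (restr N (f ` mcarrier M)) M (inv_into (mcarrier M) f)"
  unfolding rhom_def restr_simps
proof (intro conjI ballI)
  show "inv_into (mcarrier M) f \<in> f ` mcarrier M \<rightarrow> mcarrier M"
    by (auto simp: inv_into_into)
next
  fix x y assume "x \<in> f ` mcarrier M" "y \<in> f ` mcarrier M"
  then obtain a b where "a \<in> mcarrier M" "b \<in> mcarrier M" "x = f a" "y = f b" by auto
  then show "inv_into (mcarrier M) f (madd N x y) =
      madd M (inv_into (mcarrier M) f x) (inv_into (mcarrier M) f y)"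
    using inj by (simp add: hom_add[symmetric] inv_into_f_f)
next
  fix x r assume "x \<in> f ` mcarrier M" "r \<in> carrier R"
  then obtain a where "a \<in> mcarrier M" "x = f a" "r \<in> carrier R" by auto
  then show "inv_into (mcarrier M) f (msmult N x r) = msmult M (inv_into (mcarrier M) f x) r"
    using inj by (simp add: hom_smult[symmetric] inv_into_f_f)
qed

end

lemma module_homI: "right_module R M \<Longrightarrow> right_module R N \<Longrightarrow> rhom R M N f \<Longrightarrow> module_hom R M N f"
  by (intro module_hom.intro rmodule.intro module_hom_axioms.intro)

lemma rhom_id: "rhom R M M (\<lambda>x. x)"
  unfolding rhom_def by auto

lemma rhom_comp: "rhom R A B f \<Longrightarrow> rhom R B C g \<Longrightarrow> rhom R A C (\<lambda>x. g (f x))"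
  unfolding rhom_def by (auto simp: Pi_def)

lemma rhom_corestrict: "rhom R A B f \<Longrightarrow> f ` mcarrier A \<subseteq> S \<Longrightarrow> rhom R A (restr B S) f"
  unfolding rhom_def by auto

lemma rhom_restr_domain: "rhom R A B f \<Longrightarrow> S \<subseteq> mcarrier A \<Longrightarrow> rhom R (restr A S) B f"
  unfolding rhom_def by (auto simp: Pi_def subset_iff)

lemma restr_restr [simp]: "restr (restr M A) B = restr M B"
  by (simp add: restr_def)

lemma rhom_add:
  assumes N: "right_module R N" and f: "rhom R M N f" and g: "rhom R M N g"
  shows "rhom R M N (\<lambda>x. madd N (f x) (g x))"
proof -
  interpret N: rmodule R N by (rule rmodule.intro[OF N])
  have c: "f x \<in> mcarrier N" "g x \<in> mcarrier N" if "x \<in> mcarrier M" for x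
    using f g that by (auto simp: rhom_def)
  show ?thesis unfolding rhom_def
  proof (intro conjI ballI)
    show "(\<lambda>x. madd N (f x) (g x)) \<in> mcarrier M \<rightarrow> mcarrier N" using c by simp
  next
    fix x y assume "x \<in> mcarrier M" "y \<in> mcarrier M"
    then show "madd N (f (madd M x y)) (g (madd M x y)) =
        madd N (madd N (f x) (g x)) (madd N (f y) (g y))"
      using f g c by (simp add: rhom_def N.add_ac)
  next
    fix x r assume "x \<in> mcarrier M" "r \<in> carrier R"
    then show "madd N (f (msmult M x r)) (g (msmult M x r)) = msmult N (madd N (f x) (g x)) r"
      using f g c by (simp add: rhom_def N.smult_distrib_vector)
  qed
qed

lemma rhom_diff:
  assumes N: "right_module R N" and f: "rhom R M N f" and g: "rhom R M N g"
  shows "rhom R M N (\<lambda>x. madd N (f x) (mneg N (g x)))"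
proof -
  interpret N: rmodule R N by (rule rmodule.intro[OF N])
  have c: "f x \<in> mcarrier N" "g x \<in> mcarrier N" if "x \<in> mcarrier M" for x
    using f g that by (auto simp: rhom_def)
  show ?thesis unfolding rhom_def
  proof (intro conjI ballI)
    show "(\<lambda>x. madd N (f x) (mneg N (g x))) \<in> mcarrier M \<rightarrow> mcarrier N" using c by simp
  next
    fix x y assume "x \<in> mcarrier M" "y \<in> mcarrier M"
    then show "madd N (f (madd M x y)) (mneg N (g (madd M x y))) =
        madd N (madd N (f x) (mneg N (g x))) (madd N (f y) (mneg N (g y)))"
      using f g c by (simp add: rhom_def N.neg_add_distrib N.add_ac)
  next
    fix x r assume "x \<in> mcarrier M" "r \<in> carrier R"
    then show "madd N (f (msmult M x r)) (mneg N (g (msmult M x r))) =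
        msmult N (madd N (f x) (mneg N (g x))) r"
      using f g c by (simp add: rhom_def N.smult_distrib_vector N.smult_neg_vector)
  qed
qed

definition central :: "('r, 'c) ring_scheme \<Rightarrow> 'r \<Rightarrow> bool" where
  "central R s \<longleftrightarrow> s \<in> carrier R \<and> (\<forall>r\<in>carrier R. s \<otimes>\<^bsub>R\<^esub> r = r \<otimes>\<^bsub>R\<^esub> s)"

lemma rhom_smult_central:
  assumes M: "right_module R M" and s: "central R s"
  shows "rhom R M M (\<lambda>x. msmult M x s)"
proof -
  interpret M: rmodule R M by (rule rmodule.intro[OF M])
  have "msmult M (msmult M x r) s = msmult M (msmult M x s) r"
    if "x \<in> mcarrier M" "r \<in> carrier R" for x r
    using that s by (simp add: central_def M.smult_assoc[symmetric])
  then show ?thesis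
    using s unfolding rhom_def central_def by (auto simp: M.smult_distrib_vector)
qed

section \<open>Baer's criterion\<close>

definition extension_graph :: "('r, 'c) ring_scheme \<Rightarrow> ('r, 'b) rmod \<Rightarrow> ('r, 'e) rmod \<Rightarrow> 'b set \<Rightarrow>
    ('b \<Rightarrow> 'e) \<Rightarrow> ('b \<times> 'e) set \<Rightarrow> bool" where
  "extension_graph R B E A f G \<longleftrightarrow> G \<subseteq> mcarrier B \<times> mcarrier E \<and>
     (\<forall>x y y'. (x, y) \<in> G \<longrightarrow> (x, y') \<in> G \<longrightarrow> y = y') \<and>
     (\<forall>x y x' y'. (x, y) \<in> G \<longrightarrow> (x', y') \<in> G \<longrightarrow> (madd B x x', madd E y y') \<in> G) \<and>
     (\<forall>x y r. (x, y) \<in> G \<longrightarrow> r \<in> carrier R \<longrightarrow> (msmult B x r, msmult E y r) \<in> G) \<and>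
     (\<forall>x\<in>A. (x, f x) \<in> G)"

lemma extension_graphI:
  assumes "G \<subseteq> mcarrier B \<times> mcarrier E"
    and "\<And>x y y'. (x, y) \<in> G \<Longrightarrow> (x, y') \<in> G \<Longrightarrow> y = y'"
    and "\<And>x y x' y'. (x, y) \<in> G \<Longrightarrow> (x', y') \<in> G \<Longrightarrow> (madd B x x', madd E y y') \<in> G"
    and "\<And>x y r. (x, y) \<in> G \<Longrightarrow> r \<in> carrier R \<Longrightarrow> (msmult B x r, msmult E y r) \<in> G"
    and "\<And>a. a \<in> A \<Longrightarrow> (a, f a) \<in> G"
  shows "extension_graph R B E A f G"
  using assms unfolding extension_graph_def by blast

lemma extension_graphD:
  assumes "extension_graph R B E A f G"
  shows "G \<subseteq> mcarrier B \<times> mcarrier E"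
    and "\<And>x y y'. (x, y) \<in> G \<Longrightarrow> (x, y') \<in> G \<Longrightarrow> y = y'"
    and "\<And>x y x' y'. (x, y) \<in> G \<Longrightarrow> (x', y') \<in> G \<Longrightarrow> (madd B x x', madd E y y') \<in> G"
    and "\<And>x y r. (x, y) \<in> G \<Longrightarrow> r \<in> carrier R \<Longrightarrow> (msmult B x r, msmult E y r) \<in> G"
    and "\<And>a. a \<in> A \<Longrightarrow> (a, f a) \<in> G"
  using assms unfolding extension_graph_def by blast+

lemma extension_graph_restrict:
  assumes "extension_graph R B E D g G" "A \<subseteq> D" "\<forall>a\<in>A. g a = f a"
  shows "extension_graph R B E A f G"
  by (rule extension_graphI[OF extension_graphD(1-4)[OF assms(1)]])
    (use assms extension_graphD(5)[OF assms(1)] in force)+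

lemma extension_graph_graph:
  assumes B: "right_module R B" and A: "rsubmodule R B A" and f: "rhom R (restr B A) E f"
  shows "extension_graph R B E A f ((\<lambda>x. (x, f x)) ` A)"
proof -
  interpret B: rmodule R B by (rule rmodule.intro[OF B])
  show ?thesis
    using f B.submodule_mem[OF A] B.submodule_add[OF A] B.submodule_smult[OF A]
    unfolding extension_graph_def rhom_def by (auto simp: image_iff)
qed

lemma extension_graph_chain_Union:
  assumes C: "C \<noteq> {}" "\<And>G. G \<in> C \<Longrightarrow> extension_graph R B E A f G"
    and chain: "\<forall>G1\<in>C. \<forall>G2\<in>C. G1 \<subseteq> G2 \<or> G2 \<subseteq> G1"
  shows "extension_graph R B E A f (\<Union>C)"
proof -
  have common: "\<exists>G\<in>C. p \<in> G \<and> q \<in> G" if "p \<in> \<Union>C" "q \<in> \<Union>C" for p q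
    using that chain by blast
  show ?thesis
  proof (rule extension_graphI)
    show "\<Union> C \<subseteq> mcarrier B \<times> mcarrier E" using extension_graphD(1)[OF C(2)] by blast
  next
    fix x y y' assume "(x, y) \<in> \<Union> C" "(x, y') \<in> \<Union> C"
    then obtain G where "G \<in> C" "(x, y) \<in> G" "(x, y') \<in> G" using common by blast
    then show "y = y'" using extension_graphD(2)[OF C(2)] by blast
  next
    fix x y x' y' assume "(x, y) \<in> \<Union> C" "(x', y') \<in> \<Union> C"
    then obtain G where "G \<in> C" "(x, y) \<in> G" "(x', y') \<in> G" using common by blast
    then show "(madd B x x', madd E y y') \<in> \<Union> C" using extension_graphD(3)[OF C(2)] by blast
  next
    fix x y r assume "(x, y) \<in> \<Union> C" "r \<in> carrier R"
    then obtain G where "G \<in> C" "(x, y) \<in> G" by blast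
    then show "(msmult B x r, msmult E y r) \<in> \<Union> C"
      using extension_graphD(4)[OF C(2)] \<open>r \<in> carrier R\<close> by blast
  next
    fix a assume "a \<in> A"
    obtain G where "G \<in> C" using C(1) by blast
    then show "(a, f a) \<in> \<Union> C" using extension_graphD(5)[OF C(2)] \<open>a \<in> A\<close> by blast
  qed
qed

lemma extension_graph_maximal:
  assumes B: "right_module R B" and A: "rsubmodule R B A" and f: "rhom R (restr B A) E f"
  obtains G where "extension_graph R B E A f G"
    and "\<And>G'. extension_graph R B E A f G' \<Longrightarrow> G \<subseteq> G' \<Longrightarrow> G' = G"
proof -
  let ?S = "{G. extension_graph R B E A f G}"
  have "\<exists>U\<in>?S. \<forall>X\<in>C. X \<subseteq> U" if C: "C \<in> chains ?S" for C
  proof (cases "C = {}")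
    case True
    then show ?thesis using extension_graph_graph[OF B A f] by blast
  next
    case False
    have "C \<subseteq> ?S" "\<forall>G1\<in>C. \<forall>G2\<in>C. G1 \<subseteq> G2 \<or> G2 \<subseteq> G1"
      using C unfolding chains_def chain_subset_def by auto
    then have "extension_graph R B E A f (\<Union>C)"
      using False by (intro extension_graph_chain_Union) auto
    then show ?thesis by blast
  qed
  then obtain G where "G \<in> ?S" "\<forall>X\<in>?S. G \<subseteq> X \<longrightarrow> X = G"
    using Zorn_Lemma2[of ?S] by blast
  then show ?thesis using that by blast
qed

lemma extension_graph_is_graph:
  assumes B: "right_module R B" and A: "rsubmodule R B A" and E: "right_module R E"
    and G: "extension_graph R B E A f G"
  obtains D g where "rsubmodule R B D" "A \<subseteq> D" "rhom R (restr B D) E g" "\<forall>a\<in>A. g a = f a"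
    "G = (\<lambda>d. (d, g d)) ` D"
proof -
  interpret B: rmodule R B by (rule rmodule.intro[OF B])
  define D where "D = fst ` G"
  define g where "g = (\<lambda>x. THE y. (x, y) \<in> G)"
  have graph: "(d, y) \<in> G \<longleftrightarrow> d \<in> D \<and> y = g d" for d y
  proof
    assume "(d, y) \<in> G"
    moreover from this have "g d = y"
      unfolding g_def using extension_graphD(2)[OF G] by blast
    ultimately show "d \<in> D \<and> y = g d" unfolding D_def by force
  next
    assume "d \<in> D \<and> y = g d"
    then obtain y' where "(d, y') \<in> G" "y = g d" unfolding D_def by force
    moreover from this have "g d = y'"
      unfolding g_def using extension_graphD(2)[OF G] by blast
    ultimately show "(d, y) \<in> G" by simp
  qed
  have Dc: "d \<in> mcarrier B" "g d \<in> mcarrier E" if "d \<in> D" for d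
    using extension_graphD(1)[OF G] graph[of d "g d"] that by auto
  have Dadd: "madd B d d' \<in> D \<and> g (madd B d d') = madd E (g d) (g d')" if "d \<in> D" "d' \<in> D" for d d'
    using extension_graphD(3)[OF G, of d "g d" d' "g d'"] graph that by simp
  have Dsm: "msmult B d r \<in> D \<and> g (msmult B d r) = msmult E (g d) r"
    if "d \<in> D" "r \<in> carrier R" for d r
    using extension_graphD(4)[OF G, of d "g d" r] graph that by simp
  have AD: "a \<in> D \<and> g a = f a" if "a \<in> A" for a
    using extension_graphD(5)[OF G] graph that by simp
  have "rsubmodule R B D"
    unfolding rsubmodule_def using Dc Dadd Dsm AD B.submodule_zero[OF A] by blast
  moreover have "rhom R (restr B D) E g"
    unfolding rhom_def restr_simps using Dc Dadd Dsm by blast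
  moreover have "G = (\<lambda>d. (d, g d)) ` D" using graph by auto
  ultimately show ?thesis using that AD by blast
qed

text \<open>\<open>e\<close> is the image of \<open>1\<close> under an extension of \<open>r \<mapsto> g (x r)\<close> from the right ideal
  \<open>{r. x r \<in> D}\<close> to \<open>R\<close>.\<close>

lemma rinjective_compatible_element:
  assumes inj: "rinjective R E" and B: "right_module R B" and D: "rsubmodule R B D"
    and g: "rhom R (restr B D) E g" and x: "x \<in> mcarrier B"
  obtains e where "e \<in> mcarrier E"
    and "\<And>r. r \<in> carrier R \<Longrightarrow> msmult B x r \<in> D \<Longrightarrow> g (msmult B x r) = msmult E e r"
proof -
  interpret B: rmodule R B by (rule rmodule.intro[OF B])
  define I where "I = {r \<in> carrier R. msmult B x r \<in> D}"
  have I: "rsubmodule R (regular_module R) I"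
    using x B.submodule_zero[OF D] B.submodule_add[OF D] B.submodule_smult[OF D]
    unfolding rsubmodule_def I_def by (auto simp: B.smult_distrib_scalar B.smult_assoc)
  have "rhom R (restr (regular_module R) I) E (\<lambda>r. g (msmult B x r))"
    using g x B.submodule_smult[OF D] unfolding rhom_def I_def
    by (auto simp: B.smult_distrib_scalar B.smult_assoc)
  then obtain h where h: "rhom R (regular_module R) E h" and hI: "\<forall>r\<in>I. h r = g (msmult B x r)"
    using inj I unfolding rinjective_def by blast
  have "h r = msmult E (h \<one>\<^bsub>R\<^esub>) r" if "r \<in> carrier R" for r
    using h that B.one_closed unfolding rhom_def regular_module_simps by (metis B.l_one)
  moreover have "h \<one>\<^bsub>R\<^esub> \<in> mcarrier E" using h unfolding rhom_def by auto
  moreover have "r \<in> I" if "r \<in> carrier R" "msmult B x r \<in> D" for r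
    using that unfolding I_def by blast
  ultimately show ?thesis using that hI by metis
qed

lemma extension_graph_adjoin_well_defined:
  assumes B: "right_module R B" and E: "right_module R E" and D: "rsubmodule R B D"
    and g: "rhom R (restr B D) E g" and x: "x \<in> mcarrier B" and e: "e \<in> mcarrier E"
    and compat: "\<And>r. r \<in> carrier R \<Longrightarrow> msmult B x r \<in> D \<Longrightarrow> g (msmult B x r) = msmult E e r"
    and dr: "d \<in> D" "r \<in> carrier R" "d' \<in> D" "r' \<in> carrier R"
    and eq: "madd B d (msmult B x r) = madd B d' (msmult B x r')"
  shows "madd E (g d) (msmult E e r) = madd E (g d') (msmult E e r')"
proof -
  interpret B: rmodule R B by (rule rmodule.intro[OF B])
  interpret E: rmodule R E by (rule rmodule.intro[OF E])
  interpret g: module_hom R "restr B D" E g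
    by (intro module_homI B.restr_right_module D E g)
  note Dc = B.submodule_mem[OF D]
  have "msmult B x (r \<ominus>\<^bsub>R\<^esub> r') = madd B d' (mneg B d)"
    using B.add_eq_swap_iff[of d "msmult B x r" d' "msmult B x r'"] eq dr x Dc
    by (simp add: B.smult_diff_scalar)
  moreover have dd: "madd B d' (mneg B d) \<in> D" using B.submodule_diff[OF D] dr by blast
  moreover have "g d' = madd E (g (madd B d' (mneg B d))) (g d)"
    using g.hom_add[of "madd B d' (mneg B d)" d] dr dd Dc by (simp add: B.add_assoc)
  ultimately have "madd E (g d') (mneg E (g d)) = msmult E e (r \<ominus>\<^bsub>R\<^esub> r')"
    using compat[of "r \<ominus>\<^bsub>R\<^esub> r'"] dr dd Dc e g.hom_closed by (simp add: E.add_assoc)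
  then show ?thesis
    using E.add_eq_swap_iff[of "g d" "msmult E e r" "g d'" "msmult E e r'"] dr e
    by (simp add: E.smult_diff_scalar)
qed

lemma extension_graph_adjoin:
  assumes B: "right_module R B" and E: "right_module R E" and D: "rsubmodule R B D"
    and g: "rhom R (restr B D) E g" and x: "x \<in> mcarrier B" and e: "e \<in> mcarrier E"
    and compat: "\<And>r. r \<in> carrier R \<Longrightarrow> msmult B x r \<in> D \<Longrightarrow> g (msmult B x r) = msmult E e r"
  defines "G \<equiv> {(madd B d (msmult B x r), madd E (g d) (msmult E e r)) | d r. d \<in> D \<and> r \<in> carrier R}"
  shows "extension_graph R B E D g G" and "(x, e) \<in> G"
proof -
  interpret B: rmodule R B by (rule rmodule.intro[OF B])
  interpret E: rmodule R E by (rule rmodule.intro[OF E])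
  interpret g: module_hom R "restr B D" E g
    by (intro module_homI B.restr_right_module D E g)
  note Dc = B.submodule_mem[OF D] and Dadd = B.submodule_add[OF D] and Dsm = B.submodule_smult[OF D]
  show "extension_graph R B E D g G"
  proof (rule extension_graphI)
    show "G \<subseteq> mcarrier B \<times> mcarrier E" using Dc x e unfolding G_def by auto
  next
    fix z y y' assume "(z, y) \<in> G" "(z, y') \<in> G"
    then show "y = y'"
      using extension_graph_adjoin_well_defined[OF B E D g x e compat] unfolding G_def by auto
  next
    fix z1 y1 z2 y2 assume "(z1, y1) \<in> G" "(z2, y2) \<in> G"
    then obtain d r d' r' where dr: "d \<in> D" "r \<in> carrier R" "d' \<in> D" "r' \<in> carrier R"
      "z1 = madd B d (msmult B x r)" "y1 = madd E (g d) (msmult E e r)"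
      "z2 = madd B d' (msmult B x r')" "y2 = madd E (g d') (msmult E e r')"
      unfolding G_def by blast
    have "madd B z1 z2 = madd B (madd B d d') (msmult B x (r \<oplus>\<^bsub>R\<^esub> r'))"
      using dr Dc x by (simp add: B.smult_distrib_scalar B.add_ac)
    moreover have "madd E y1 y2 = madd E (g (madd B d d')) (msmult E e (r \<oplus>\<^bsub>R\<^esub> r'))"
      using dr e g.hom_add by (simp add: E.smult_distrib_scalar E.add_ac)
    ultimately show "(madd B z1 z2, madd E y1 y2) \<in> G"
      unfolding G_def using dr Dadd by blast
  next
    fix z y s assume "(z, y) \<in> G" "s \<in> carrier R"
    then obtain d r where dr: "d \<in> D" "r \<in> carrier R" "s \<in> carrier R"
      "z = madd B d (msmult B x r)" "y = madd E (g d) (msmult E e r)"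
      unfolding G_def by blast
    have "msmult B z s = madd B (msmult B d s) (msmult B x (r \<otimes>\<^bsub>R\<^esub> s))"
      using dr Dc x by (simp add: B.smult_distrib_vector B.smult_assoc)
    moreover have "msmult E y s = madd E (g (msmult B d s)) (msmult E e (r \<otimes>\<^bsub>R\<^esub> s))"
      using dr e g.hom_smult by (simp add: E.smult_distrib_vector E.smult_assoc)
    ultimately show "(msmult B z s, msmult E y s) \<in> G"
      unfolding G_def using dr Dsm by blast
  next
    fix d assume "d \<in> D"
    then have "(madd B d (msmult B x \<zero>\<^bsub>R\<^esub>), madd E (g d) (msmult E e \<zero>\<^bsub>R\<^esub>)) \<in> G"
      unfolding G_def by blast
    then show "(d, g d) \<in> G" using \<open>d \<in> D\<close> Dc x e by simp
  qed
  have "(madd B (mzero B) (msmult B x \<one>\<^bsub>R\<^esub>), madd E (g (mzero B)) (msmult E e \<one>\<^bsub>R\<^esub>)) \<in> G"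
    unfolding G_def using B.submodule_zero[OF D] by blast
  then show "(x, e) \<in> G" using x e g.hom_zero by simp
qed

text \<open>\<^const>\<open>rinjective\<close> only asks for extensions from right ideals of \<open>R\<close>; Zorn's lemma on
  extension graphs upgrades this to extensions from arbitrary submodules.\<close>

theorem rinjective_extend:
  assumes inj: "rinjective R E" and B: "right_module R B" and A: "rsubmodule R B A"
    and f: "rhom R (restr B A) E f"
  obtains g where "rhom R B E g" and "\<And>x. x \<in> A \<Longrightarrow> g x = f x"
proof -
  have E: "right_module R E" using inj by (simp add: rinjective_def)
  obtain G where G: "extension_graph R B E A f G"
    and max: "\<And>G'. extension_graph R B E A f G' \<Longrightarrow> G \<subseteq> G' \<Longrightarrow> G' = G"
    using extension_graph_maximal[OF B A f] by blast
  obtain D g where D: "rsubmodule R B D" "A \<subseteq> D" and g: "rhom R (restr B D) E g"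
    and gf: "\<forall>a\<in>A. g a = f a" and G_eq: "G = (\<lambda>d. (d, g d)) ` D"
    using extension_graph_is_graph[OF B A E G] by blast
  have "D = mcarrier B"
  proof (rule ccontr)
    assume "D \<noteq> mcarrier B"
    then obtain x where x: "x \<in> mcarrier B" "x \<notin> D"
      using D unfolding rsubmodule_def by blast
    obtain e where e: "e \<in> mcarrier E"
      and compat: "\<And>r. r \<in> carrier R \<Longrightarrow> msmult B x r \<in> D \<Longrightarrow> g (msmult B x r) = msmult E e r"
      using rinjective_compatible_element[OF inj B D(1) g x(1)] by blast
    define G' where "G' = {(madd B d (msmult B x r), madd E (g d) (msmult E e r)) | d r.
      d \<in> D \<and> r \<in> carrier R}"
    have G': "extension_graph R B E D g G'" "(x, e) \<in> G'"
      unfolding G'_def using extension_graph_adjoin[OF B E D(1) g x(1) e compat] by blast+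
    have "G \<subseteq> G'" using extension_graphD(5)[OF G'(1)] unfolding G_eq by blast
    then have "G' = G" using extension_graph_restrict[OF G'(1) D(2) gf] max by blast
    then show False using G'(2) x(2) unfolding G_eq by auto
  qed
  then have "rhom R B E g" using g by (simp add: rhom_def)
  then show ?thesis using that gf by blast
qed

section \<open>Idempotent endomorphisms of injective modules\<close>

definition idempotent_endo :: "('r, 'c) ring_scheme \<Rightarrow> ('r, 'e) rmod \<Rightarrow> ('e \<Rightarrow> 'e) \<Rightarrow> bool" where
  "idempotent_endo R E e \<longleftrightarrow> rhom R E E e \<and> (\<forall>x\<in>mcarrier E. e (e x) = e x)"

definition trivial_idempotents :: "('r, 'c) ring_scheme \<Rightarrow> ('r, 'e) rmod \<Rightarrow> bool" where
  "trivial_idempotents R E \<longleftrightarrow> (\<forall>e. idempotent_endo R E e \<longrightarrow>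
     (\<forall>x\<in>mcarrier E. e x = mzero E) \<or> (\<forall>x\<in>mcarrier E. e x = x))"

context rmodule
begin

lemma maximal_disjoint_submodule:
  assumes K: "rsubmodule R M K" and L: "rsubmodule R M L" and KL: "K \<inter> L = {mzero M}"
  obtains C where "rsubmodule R M C" "K \<subseteq> C" "C \<inter> L = {mzero M}"
    and "\<And>C'. rsubmodule R M C' \<Longrightarrow> C \<subseteq> C' \<Longrightarrow> C' \<inter> L = {mzero M} \<Longrightarrow> C' = C"
proof -
  define S where "S = {C. rsubmodule R M C \<and> K \<subseteq> C \<and> C \<inter> L = {mzero M}}"
  have "\<forall>C\<in>chains S. \<exists>U\<in>S. \<forall>X\<in>C. X \<subseteq> U"
  proof
    fix C assume C: "C \<in> chains S"
    show "\<exists>U\<in>S. \<forall>X\<in>C. X \<subseteq> U"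
    proof (cases "C = {}")
      case True
      have "K \<in> S" using K KL S_def by simp
      then show ?thesis using True by blast
    next
      case False
      have CS: "C \<subseteq> S" "\<forall>A\<in>C. \<forall>B\<in>C. A \<subseteq> B \<or> B \<subseteq> A"
        using C unfolding chains_def chain_subset_def by auto
      have sub: "rsubmodule R M (\<Union>C)"
        by (rule submodule_chain_Union) (use False CS S_def in auto)
      moreover have "K \<subseteq> \<Union>C" using False CS S_def by blast
      moreover have "\<Union>C \<inter> L \<subseteq> {mzero M}" using CS S_def by blast
      moreover have "mzero M \<in> \<Union>C" "mzero M \<in> L" using sub L submodule_zero by blast+
      ultimately have "\<Union>C \<in> S" using S_def by blast
      then show ?thesis by blast
    qed
  qed
  from Zorn_Lemma2[OF this] obtain C where C: "C \<in> S" and max: "\<forall>X\<in>S. C \<subseteq> X \<longrightarrow> X = C"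
    by blast
  show ?thesis
  proof (rule that)
    show "rsubmodule R M C" "K \<subseteq> C" "C \<inter> L = {mzero M}" using C unfolding S_def by simp_all
  next
    fix C' assume C': "rsubmodule R M C'" "C \<subseteq> C'" "C' \<inter> L = {mzero M}"
    then have "C' \<in> S" using C unfolding S_def by auto
    then show "C' = C" using max C'(2) by blast
  qed
qed

lemma direct_sum_projection:
  assumes C: "rsubmodule R M C" and L: "rsubmodule R M L" and CL: "C \<inter> L = {mzero M}"
  obtains \<pi> where "rhom R (restr M {madd M c l | c l. c \<in> C \<and> l \<in> L}) M \<pi>"
    and "\<And>c l. c \<in> C \<Longrightarrow> l \<in> L \<Longrightarrow> \<pi> (madd M c l) = c"
proof -
  note Cm = submodule_mem[OF C] and Lm = submodule_mem[OF L]
  have unique: "c = c'" if "c \<in> C" "l \<in> L" "c' \<in> C" "l' \<in> L" "madd M c l = madd M c' l'"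
    for c l c' l'
  proof -
    have "madd M c' (mneg M c) = madd M l (mneg M l')"
      using add_eq_swap_iff[of c l c' l'] that Cm Lm by simp
    moreover have "madd M c' (mneg M c) \<in> C" "madd M l (mneg M l') \<in> L"
      using submodule_diff[OF C] submodule_diff[OF L] that by blast+
    ultimately have "madd M c' (mneg M c) = mzero M" using CL by auto
    then show "c = c'" using diff_eq_zero_iff[of c' c] that Cm by simp
  qed
  define \<pi> where "\<pi> = (\<lambda>z. THE c. c \<in> C \<and> (\<exists>l\<in>L. z = madd M c l))"
  have \<pi>: "\<pi> (madd M c l) = c" if "c \<in> C" "l \<in> L" for c l
    unfolding \<pi>_def using that unique by (intro the_equality) blast+
  have "rhom R (restr M {madd M c l | c l. c \<in> C \<and> l \<in> L}) M \<pi>"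
    unfolding rhom_def restr_simps
  proof (intro conjI ballI)
    show "\<pi> \<in> {madd M c l | c l. c \<in> C \<and> l \<in> L} \<rightarrow> mcarrier M" using \<pi> Cm by auto
  next
    fix x y assume "x \<in> {madd M c l | c l. c \<in> C \<and> l \<in> L}" "y \<in> {madd M c l | c l. c \<in> C \<and> l \<in> L}"
    then obtain c l c' l' where cl: "c \<in> C" "l \<in> L" "c' \<in> C" "l' \<in> L"
      "x = madd M c l" "y = madd M c' l'"
      by blast
    have "madd M x y = madd M (madd M c c') (madd M l l')" using cl Cm Lm by (simp add: add_ac)
    moreover have "madd M c c' \<in> C" "madd M l l' \<in> L"
      using cl submodule_add C L by auto
    ultimately show "\<pi> (madd M x y) = madd M (\<pi> x) (\<pi> y)" using \<pi> cl by simp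
  next
    fix x r assume "x \<in> {madd M c l | c l. c \<in> C \<and> l \<in> L}" "r \<in> carrier R"
    then obtain c l where cl: "c \<in> C" "l \<in> L" "x = madd M c l" and r: "r \<in> carrier R"
      by blast
    have "msmult M x r = madd M (msmult M c r) (msmult M l r)"
      using cl Cm Lm r by (simp add: smult_distrib_vector)
    moreover have "msmult M c r \<in> C" "msmult M l r \<in> L"
      using cl submodule_smult C L r by auto
    ultimately show "\<pi> (msmult M x r) = msmult M (\<pi> x) r" using \<pi> cl by simp
  qed
  then show ?thesis using that \<pi> by blast
qed

text \<open>By maximality of \<open>L\<close> the preimage of \<open>L\<close> is \<open>L\<close> itself, so the image of \<open>p\<close> meets \<open>L\<close>
  trivially and, by maximality of \<open>C\<close>, equals \<open>C\<close>.\<close>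

lemma projection_range_subset:
  assumes C: "rsubmodule R M C" and L: "rsubmodule R M L" and CL: "C \<inter> L = {mzero M}"
    and Cmax: "\<And>C'. rsubmodule R M C' \<Longrightarrow> C \<subseteq> C' \<Longrightarrow> C' \<inter> L = {mzero M} \<Longrightarrow> C' = C"
    and Lmax: "\<And>L'. rsubmodule R M L' \<Longrightarrow> L \<subseteq> L' \<Longrightarrow> L' \<inter> C = {mzero M} \<Longrightarrow> L' = L"
    and p: "rhom R M M p" and pC: "\<And>c. c \<in> C \<Longrightarrow> p c = c" and pL: "\<And>l. l \<in> L \<Longrightarrow> p l = mzero M"
  shows "p ` mcarrier M \<subseteq> C"
proof -
  interpret p: module_hom R M M p by (intro module_homI right_module p)
  define P where "P = {x \<in> mcarrier M. p x \<in> L}"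
  have P: "rsubmodule R M P" unfolding P_def by (rule p.vimage_submodule[OF L])
  have "L \<subseteq> P" unfolding P_def using pL submodule_mem[OF L] submodule_zero[OF L] by auto
  moreover have "P \<inter> C = {mzero M}"
  proof
    show "P \<inter> C \<subseteq> {mzero M}" using pC CL unfolding P_def by auto
    show "{mzero M} \<subseteq> P \<inter> C" using submodule_zero[OF P] submodule_zero[OF C] by blast
  qed
  ultimately have PL: "P = L" by (rule Lmax[OF P])
  have "C \<subseteq> p ` mcarrier M" using pC submodule_mem[OF C] by (metis image_eqI subsetI)
  moreover have "p ` mcarrier M \<inter> L = {mzero M}"
  proof
    show "p ` mcarrier M \<inter> L \<subseteq> {mzero M}"
      using PL pL unfolding P_def by auto
    show "{mzero M} \<subseteq> p ` mcarrier M \<inter> L"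
      using submodule_zero[OF p.range_submodule] submodule_zero[OF L] by blast
  qed
  ultimately show ?thesis using Cmax[OF p.range_submodule] by blast
qed

end

lemma rinjective_projection:
  assumes inj: "rinjective R E" and C: "rsubmodule R E C" and L: "rsubmodule R E L"
    and CL: "C \<inter> L = {mzero E}"
  obtains p where "rhom R E E p" "\<And>c. c \<in> C \<Longrightarrow> p c = c" "\<And>l. l \<in> L \<Longrightarrow> p l = mzero E"
proof -
  have E: "right_module R E" using inj by (simp add: rinjective_def)
  interpret E: rmodule R E by (rule rmodule.intro[OF E])
  obtain \<pi> where \<pi>: "rhom R (restr E {madd E c l | c l. c \<in> C \<and> l \<in> L}) E \<pi>"
    and \<pi>_eq: "\<And>c l. c \<in> C \<Longrightarrow> l \<in> L \<Longrightarrow> \<pi> (madd E c l) = c"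
    using E.direct_sum_projection[OF C L CL] by blast
  obtain p where p: "rhom R E E p"
    and p\<pi>: "\<And>x. x \<in> {madd E c l | c l. c \<in> C \<and> l \<in> L} \<Longrightarrow> p x = \<pi> x"
    using rinjective_extend[OF inj E E.submodule_sum[OF C L] \<pi>] by blast
  have "p c = c" if "c \<in> C" for c
  proof -
    have "madd E c (mzero E) \<in> {madd E c l | c l. c \<in> C \<and> l \<in> L}"
      using that E.submodule_zero[OF L] by blast
    then show ?thesis
      using p\<pi> \<pi>_eq[OF that E.submodule_zero[OF L]] that E.submodule_mem[OF C] by simp
  qed
  moreover have "p l = mzero E" if "l \<in> L" for l
  proof -
    have "madd E (mzero E) l \<in> {madd E c l | c l. c \<in> C \<and> l \<in> L}"
      using that E.submodule_zero[OF C] by blast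
    then show ?thesis
      using p\<pi> \<pi>_eq[OF E.submodule_zero[OF C] that] that E.submodule_mem[OF L] by simp
  qed
  ultimately show ?thesis using that p by blast
qed

lemma rinjective_disjoint_nontrivial_idempotent:
  assumes inj: "rinjective R E" and K: "rsubmodule R E K" and L: "rsubmodule R E L"
    and K0: "K \<noteq> {mzero E}" and L0: "L \<noteq> {mzero E}" and KL: "K \<inter> L = {mzero E}"
  obtains p where "idempotent_endo R E p" "\<exists>x\<in>mcarrier E. p x \<noteq> mzero E" "\<exists>x\<in>mcarrier E. p x \<noteq> x"
proof -
  have E: "right_module R E" using inj by (simp add: rinjective_def)
  interpret E: rmodule R E by (rule rmodule.intro[OF E])
  obtain C where C: "rsubmodule R E C" "K \<subseteq> C" "C \<inter> L = {mzero E}"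
    and Cmax0: "\<And>C'. rsubmodule R E C' \<Longrightarrow> C \<subseteq> C' \<Longrightarrow> C' \<inter> L = {mzero E} \<Longrightarrow> C' = C"
    using E.maximal_disjoint_submodule[OF K L KL] by blast
  obtain L' where L': "rsubmodule R E L'" "L \<subseteq> L'" "L' \<inter> C = {mzero E}"
    and Lmax: "\<And>L''. rsubmodule R E L'' \<Longrightarrow> L' \<subseteq> L'' \<Longrightarrow> L'' \<inter> C = {mzero E} \<Longrightarrow> L'' = L'"
    using E.maximal_disjoint_submodule[OF L C(1)] C(3) by blast
  have Cmax: "C' = C" if "rsubmodule R E C'" "C \<subseteq> C'" "C' \<inter> L' = {mzero E}" for C'
  proof (rule Cmax0[OF that(1,2)])
    show "C' \<inter> L = {mzero E}"
      using that(3) L'(2) E.submodule_zero[OF that(1)] E.submodule_zero[OF L] by blast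
  qed
  have CL': "C \<inter> L' = {mzero E}" using L'(3) by blast
  obtain p where p: "rhom R E E p" and pC: "\<And>c. c \<in> C \<Longrightarrow> p c = c"
    and pL: "\<And>l. l \<in> L' \<Longrightarrow> p l = mzero E"
    using rinjective_projection[OF inj C(1) L'(1) CL'] by blast
  have "p ` mcarrier E \<subseteq> C"
    by (rule E.projection_range_subset[OF C(1) L'(1) CL' Cmax Lmax p pC pL]) blast+
  then have "idempotent_endo R E p" using p pC unfolding idempotent_endo_def by blast
  moreover obtain k where "k \<in> K" "k \<noteq> mzero E" using K0 E.submodule_zero[OF K] by blast
  then have "k \<in> mcarrier E" "p k \<noteq> mzero E" using pC C(2) E.submodule_mem[OF K] by auto
  moreover obtain l where "l \<in> L" "l \<noteq> mzero E" using L0 E.submodule_zero[OF L] by blast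
  then have "l \<in> mcarrier E" "p l \<noteq> l" using pL L'(2) E.submodule_mem[OF L] by auto
  ultimately show ?thesis using that by blast
qed

lemma trivial_idempotents_uniform:
  assumes "rinjective R E" "trivial_idempotents R E" "rsubmodule R E K" "rsubmodule R E L"
    and "K \<noteq> {mzero E}" "L \<noteq> {mzero E}"
  shows "K \<inter> L \<noteq> {mzero E}"
proof
  assume "K \<inter> L = {mzero E}"
  then obtain p where "idempotent_endo R E p" "\<exists>x\<in>mcarrier E. p x \<noteq> mzero E"
    "\<exists>x\<in>mcarrier E. p x \<noteq> x"
    using rinjective_disjoint_nontrivial_idempotent[of R E K L] assms by blast
  then show False using assms(2) unfolding trivial_idempotents_def by blast
qed

text \<open>\<open>s \<oplus> s' \<oplus> s s' = \<zero>\<close> says \<open>(\<one> \<oplus> s)(\<one> \<oplus> s') = \<one>\<close>; for an idempotent \<open>e\<close> the maps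
  \<open>x \<mapsto> x + e(x) s\<close> and \<open>x \<mapsto> x + e(x) s'\<close> are then mutually inverse.\<close>

lemma (in rmodule) idempotent_unit_automorphism:
  assumes e: "idempotent_endo R M e" and s: "central R s" and s': "central R s'"
    and ss': "s \<oplus>\<^bsub>R\<^esub> s' \<oplus>\<^bsub>R\<^esub> s \<otimes>\<^bsub>R\<^esub> s' = \<zero>\<^bsub>R\<^esub>"
  shows "rautomorphism R M (\<lambda>x. madd M x (msmult M (e x) s))"
proof -
  have e_hom: "rhom R M M e" and idem: "\<And>x. x \<in> mcarrier M \<Longrightarrow> e (e x) = e x"
    using e unfolding idempotent_endo_def by auto
  interpret e: module_hom R M M e by (intro module_homI right_module e_hom)
  have sR: "s \<in> carrier R" "s' \<in> carrier R" using s s' unfolding central_def by auto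
  have comm: "s' \<otimes>\<^bsub>R\<^esub> s = s \<otimes>\<^bsub>R\<^esub> s'" using s sR unfolding central_def by simp
  define \<sigma> where "\<sigma> a x = madd M x (msmult M (e x) a)" for a x
  have inverse: "\<sigma> a (\<sigma> b x) = x"
    if "a \<in> carrier R" "b \<in> carrier R" "a \<oplus>\<^bsub>R\<^esub> b \<oplus>\<^bsub>R\<^esub> b \<otimes>\<^bsub>R\<^esub> a = \<zero>\<^bsub>R\<^esub>"
      and x: "x \<in> mcarrier M" for a b x
  proof -
    have "e (\<sigma> b x) = madd M (e x) (msmult M (e x) b)"
      unfolding \<sigma>_def using x that idem by (simp add: e.hom_add e.hom_smult)
    moreover have "madd M (madd M (msmult M (e x) a) (msmult M (e x) b)) (msmult M (e x) (b \<otimes>\<^bsub>R\<^esub> a))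
        = mzero M"
      using smult_distrib_scalar[of "e x" "a \<oplus>\<^bsub>R\<^esub> b" "b \<otimes>\<^bsub>R\<^esub> a"]
        smult_distrib_scalar[of "e x" a b] that e.hom_closed[OF x]
      by simp
    ultimately show ?thesis
      unfolding \<sigma>_def using x that by (simp add: smult_distrib_vector smult_assoc add_ac)
  qed
  have "rhom R M M (\<sigma> s)"
    unfolding \<sigma>_def
    by (rule rhom_add[OF right_module rhom_id rhom_comp[OF e_hom rhom_smult_central[OF right_module s]]])
  moreover have "bij_betw (\<sigma> s) (mcarrier M) (mcarrier M)"
  proof (rule bij_betw_byWitness[where f' = "\<sigma> s'"])
    show "\<forall>x\<in>mcarrier M. \<sigma> s' (\<sigma> s x) = x"
      using inverse[of s' s] sR ss' comm by (simp add: a_comm)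
    show "\<forall>x\<in>mcarrier M. \<sigma> s (\<sigma> s' x) = x"
      using inverse[of s s'] sR ss' comm by simp
    show "\<sigma> s ` mcarrier M \<subseteq> mcarrier M" "\<sigma> s' ` mcarrier M \<subseteq> mcarrier M"
      unfolding \<sigma>_def using sR by auto
  qed
  ultimately show ?thesis unfolding rautomorphism_def \<sigma>_def by blast
qed

lemma trivial_idempotents_mono_automorphism:
  assumes inj: "rinjective R E" and triv: "trivial_idempotents R E" and h: "rhom R E E h"
    and ker: "\<forall>x\<in>mcarrier E. h x = mzero E \<longrightarrow> x = mzero E"
  shows "rautomorphism R E h"
proof -
  have E: "right_module R E" using inj by (simp add: rinjective_def)
  interpret E: rmodule R E by (rule rmodule.intro[OF E])
  interpret h: module_hom R E E h by (intro module_homI E h)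
  have h_inj: "inj_on h (mcarrier E)" using h.inj_on_iff_kernel_trivial ker by blast
  obtain g where g: "rhom R E E g" and gh: "\<And>y. y \<in> h ` mcarrier E \<Longrightarrow> g y = inv_into (mcarrier E) h y"
    using rinjective_extend[OF inj E h.range_submodule h.rhom_inv_into[OF h_inj]] by blast
  have ghx: "g (h x) = x" if "x \<in> mcarrier E" for x
    using gh that h_inj by (simp add: inv_into_f_f)
  have gE: "g x \<in> mcarrier E" if "x \<in> mcarrier E" for x using g that by (auto simp: rhom_def)
  have "idempotent_endo R E (\<lambda>x. h (g x))"
    unfolding idempotent_endo_def using rhom_comp[OF g h] ghx gE by simp
  then have "(\<forall>x\<in>mcarrier E. h (g x) = mzero E) \<or> (\<forall>x\<in>mcarrier E. h (g x) = x)"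
    using triv unfolding trivial_idempotents_def by blast
  then have "x \<in> h ` mcarrier E" if x: "x \<in> mcarrier E" for x
  proof
    assume "\<forall>x\<in>mcarrier E. h (g x) = mzero E"
    then have "h x = mzero E" using ghx[OF x] h.hom_closed[OF x] by metis
    then have "x = mzero E" using ker x by blast
    then show ?thesis using h.hom_zero by (metis E.zero_closed image_eqI)
  next
    assume "\<forall>x\<in>mcarrier E. h (g x) = x"
    then show ?thesis using gE x by (metis image_eqI)
  qed
  then have "h ` mcarrier E = mcarrier E" by auto
  then show ?thesis unfolding rautomorphism_def bij_betw_def using h h_inj by blast
qed

text \<open>\<open>End(E)\<close> is a local ring: the kernels of \<open>h\<close> and \<open>1 - h\<close> are
  disjoint, so by uniformity one of them is zero.\<close>

lemma trivial_idempotents_automorphism_or_complement: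
  assumes inj: "rinjective R E" and triv: "trivial_idempotents R E" and h: "rhom R E E h"
  shows "rautomorphism R E h \<or> rautomorphism R E (\<lambda>x. madd E x (mneg E (h x)))"
proof -
  have E: "right_module R E" using inj by (simp add: rinjective_def)
  interpret E: rmodule R E by (rule rmodule.intro[OF E])
  have u: "rhom R E E (\<lambda>x. madd E x (mneg E (h x)))" by (rule rhom_diff[OF E rhom_id h])
  interpret h: module_hom R E E h by (intro module_homI E h)
  interpret u: module_hom R E E "\<lambda>x. madd E x (mneg E (h x))" by (intro module_homI E u)
  have "{x \<in> mcarrier E. h x = mzero E} \<inter> {x \<in> mcarrier E. madd E x (mneg E (h x)) = mzero E}
      = {mzero E}"
    using E.diff_eq_zero_iff by auto
  then have "{x \<in> mcarrier E. h x = mzero E} = {mzero E} \<or>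
      {x \<in> mcarrier E. madd E x (mneg E (h x)) = mzero E} = {mzero E}"
    using trivial_idempotents_uniform[OF inj triv h.kernel_submodule u.kernel_submodule] by blast
  then show ?thesis
    using trivial_idempotents_mono_automorphism[OF inj triv] h u by blast
qed

section \<open>Modules inside their injective hull\<close>

locale module_hull =
  fixes R :: "('r, 'c) ring_scheme" and M :: "('r, 'm) rmod" and E :: "('r, 'e) rmod"
    and \<iota> :: "'m \<Rightarrow> 'e"
  assumes hull: "injective_hull R M E \<iota>"
begin

lemma E_rinjective: "rinjective R E"
  using hull by (simp add: injective_hull_def)

sublocale M: rmodule R M
  using hull by (simp add: injective_hull_def rmodule_def)

sublocale E: rmodule R E
  using E_rinjective by (simp add: rinjective_def rmodule_def)

sublocale \<iota>: module_hom R M E \<iota>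
  using hull by (intro module_homI M.right_module E.right_module) (simp add: injective_hull_def)

abbreviation \<iota>M :: "'e set" where
  "\<iota>M \<equiv> \<iota> ` mcarrier M"

lemma \<iota>_inj: "inj_on \<iota> (mcarrier M)"
  using hull by (simp add: injective_hull_def)

lemma \<iota>M_submodule: "rsubmodule R E \<iota>M"
  by (rule \<iota>.range_submodule)

lemma \<iota>M_essential: "rsubmodule R E K \<Longrightarrow> K \<inter> \<iota>M \<subseteq> {mzero E} \<Longrightarrow> K = {mzero E}"
  using hull E.submodule_zero \<iota>M_submodule
  unfolding injective_hull_def essential_def by blast

lemma \<iota>_eq_zero_iff: "m \<in> mcarrier M \<Longrightarrow> \<iota> m = mzero E \<longleftrightarrow> m = mzero M"
  using \<iota>_inj \<iota>.inj_on_iff_kernel_trivial by auto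

lemma inv_into_\<iota> [simp]: "m \<in> mcarrier M \<Longrightarrow> inv_into (mcarrier M) \<iota> (\<iota> m) = m"
  using \<iota>_inj by (simp add: inv_into_f_f)

lemma rhom_inv_into_\<iota>: "rhom R (restr E \<iota>M) M (inv_into (mcarrier M) \<iota>)"
  by (rule \<iota>.rhom_inv_into[OF \<iota>_inj])

lemma kernel_trivial_if_trivial_on_\<iota>M:
  assumes h: "rhom R E E h" and ker: "\<And>m. m \<in> mcarrier M \<Longrightarrow> h (\<iota> m) = mzero E \<Longrightarrow> m = mzero M"
  shows "\<forall>x\<in>mcarrier E. h x = mzero E \<longrightarrow> x = mzero E"
proof -
  interpret h: module_hom R E E h by (intro module_homI E.right_module h)
  have "{x \<in> mcarrier E. h x = mzero E} \<inter> \<iota>M \<subseteq> {mzero E}"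
  proof
    fix y assume "y \<in> {x \<in> mcarrier E. h x = mzero E} \<inter> \<iota>M"
    then obtain m where m: "m \<in> mcarrier M" "h (\<iota> m) = mzero E" "y = \<iota> m" by blast
    then have "m = mzero M" by (intro ker)
    then show "y \<in> {mzero E}" using m by simp
  qed
  then show ?thesis using \<iota>M_essential[OF h.kernel_submodule] by blast
qed

text \<open>Extend \<open>\<sigma>\<close> restricted to \<open>\<sigma>\<^sup>-\<^sup>1(M) \<inter> M\<close> to an endomorphism \<open>g\<close> of \<open>M\<close>; the image of
  \<open>\<sigma> - g\<close> then meets \<open>M\<close> trivially, so it is zero by essentiality.\<close>

lemma quasi_injective_endo_invariant:
  assumes qi: "quasi_injective R M" and \<sigma>: "rhom R E E \<sigma>"
  shows "\<sigma> ` \<iota>M \<subseteq> \<iota>M"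
proof -
  have \<sigma>\<iota>: "rhom R M E (\<lambda>m. \<sigma> (\<iota> m))" by (rule rhom_comp[OF \<iota>.hom \<sigma>])
  interpret \<sigma>\<iota>: module_hom R M E "\<lambda>m. \<sigma> (\<iota> m)" by (intro module_homI M.right_module E.right_module \<sigma>\<iota>)
  define X where "X = {m \<in> mcarrier M. \<sigma> (\<iota> m) \<in> \<iota>M}"
  have X: "rsubmodule R M X" unfolding X_def by (rule \<sigma>\<iota>.vimage_submodule[OF \<iota>M_submodule])
  have "rhom R (restr M X) (restr E \<iota>M) (\<lambda>m. \<sigma> (\<iota> m))"
    by (rule rhom_corestrict[OF rhom_restr_domain[OF \<sigma>\<iota>]]) (auto simp: X_def)
  then have "rhom R (restr M X) M (\<lambda>m. inv_into (mcarrier M) \<iota> (\<sigma> (\<iota> m)))"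
    using rhom_comp rhom_inv_into_\<iota> by blast
  then obtain g where g: "rhom R M M g" and gX: "\<And>m. m \<in> X \<Longrightarrow> g m = inv_into (mcarrier M) \<iota> (\<sigma> (\<iota> m))"
    using qi X unfolding quasi_injective_def by blast
  have gM: "g m \<in> mcarrier M" if "m \<in> mcarrier M" for m using g that by (auto simp: rhom_def)
  define d where "d m = madd E (\<sigma> (\<iota> m)) (mneg E (\<iota> (g m)))" for m
  have "rhom R M E d" unfolding d_def by (rule rhom_diff[OF E.right_module \<sigma>\<iota> rhom_comp[OF g \<iota>.hom]])
  then interpret d: module_hom R M E d by (intro module_homI M.right_module E.right_module)
  have \<sigma>_eq: "\<sigma> (\<iota> m) = madd E (d m) (\<iota> (g m))" if "m \<in> mcarrier M" for m
    using that gM unfolding d_def by (simp add: E.add_assoc)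
  have "d ` mcarrier M \<inter> \<iota>M \<subseteq> {mzero E}"
  proof
    fix y assume "y \<in> d ` mcarrier M \<inter> \<iota>M"
    then obtain m m' where m: "m \<in> mcarrier M" "m' \<in> mcarrier M" "y = d m" "y = \<iota> m'" by blast
    then have "\<sigma> (\<iota> m) = \<iota> (madd M m' (g m))" using \<sigma>_eq gM by (simp add: \<iota>.hom_add)
    then have "m \<in> X" using m gM unfolding X_def by auto
    then have "\<iota> (g m) = \<sigma> (\<iota> m)" using gX unfolding X_def by (auto simp: f_inv_into_f)
    then show "y \<in> {mzero E}" using m gM unfolding d_def by simp
  qed
  then have "d ` mcarrier M = {mzero E}" by (rule \<iota>M_essential[OF d.range_submodule])
  then have "\<sigma> (\<iota> m) = \<iota> (g m)" if "m \<in> mcarrier M" for m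
    using \<sigma>_eq[OF that] that gM by (metis E.zero_add \<iota>.hom_closed image_eqI singletonD)
  then show ?thesis using gM by auto
qed

text \<open>A homomorphism \<open>N \<rightarrow> M\<close> is extended to an endomorphism of \<open>E\<close> by injectivity and then
  restricted back to \<open>M\<close>.\<close>

lemma endo_invariant_quasi_injective:
  assumes inv: "\<And>h. rhom R E E h \<Longrightarrow> h ` \<iota>M \<subseteq> \<iota>M"
  shows "quasi_injective R M"
  unfolding quasi_injective_def
proof (intro allI impI)
  fix N f assume "rsubmodule R M N \<and> rhom R (restr M N) M f"
  then have N: "rsubmodule R M N" and f: "rhom R (restr M N) M f" by auto
  have NM: "N \<subseteq> mcarrier M" by (rule M.submodule_subset[OF N])
  let ?inv = "inv_into (mcarrier M) \<iota>"
  have "rhom R (restr E (\<iota> ` N)) M ?inv"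
    using rhom_restr_domain[OF rhom_inv_into_\<iota>, of "\<iota> ` N"] NM by auto
  then have "rhom R (restr E (\<iota> ` N)) (restr M N) ?inv"
    by (rule rhom_corestrict) (use NM in auto)
  then have "rhom R (restr E (\<iota> ` N)) E (\<lambda>y. \<iota> (f (?inv y)))"
    by (rule rhom_comp[OF rhom_comp[OF _ f] \<iota>.hom])
  then obtain h where h: "rhom R E E h" and hN: "\<And>y. y \<in> \<iota> ` N \<Longrightarrow> h y = \<iota> (f (?inv y))"
    using rinjective_extend[OF E_rinjective E.right_module \<iota>.image_submodule[OF N]] by blast
  have "rhom R M (restr E \<iota>M) (\<lambda>m. h (\<iota> m))"
    by (rule rhom_corestrict[OF rhom_comp[OF \<iota>.hom h]]) (use inv[OF h] in auto)
  then have "rhom R M M (\<lambda>m. ?inv (h (\<iota> m)))"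
    using rhom_comp rhom_inv_into_\<iota> by blast
  moreover have "?inv (h (\<iota> n)) = f n" if "n \<in> N" for n
  proof -
    have "n \<in> mcarrier M" "f n \<in> mcarrier M" using that NM f by (auto simp: rhom_def)
    then show ?thesis using hN[of "\<iota> n"] that by simp
  qed
  ultimately show "\<exists>g. rhom R M M g \<and> (\<forall>x\<in>N. g x = f x)" by blast
qed

lemma aut_invariant_idempotent_invariant:
  assumes aut: "\<And>\<sigma>. rautomorphism R E \<sigma> \<Longrightarrow> \<sigma> ` \<iota>M \<subseteq> \<iota>M"
    and t: "central R t" and t': "central R t'" and tt': "t \<oplus>\<^bsub>R\<^esub> t' \<oplus>\<^bsub>R\<^esub> t \<otimes>\<^bsub>R\<^esub> t' = \<zero>\<^bsub>R\<^esub>"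
    and u: "u \<in> carrier R" and tu: "t \<otimes>\<^bsub>R\<^esub> u = \<one>\<^bsub>R\<^esub>"
    and e: "idempotent_endo R E e"
  shows "e ` \<iota>M \<subseteq> \<iota>M"
proof
  fix y assume "y \<in> e ` \<iota>M"
  then obtain x where x: "x \<in> \<iota>M" and y: "y = e x" by blast
  have xE: "x \<in> mcarrier E" and tR: "t \<in> carrier R"
    using x t unfolding central_def by auto
  have eE: "e x \<in> mcarrier E" using e xE unfolding idempotent_endo_def rhom_def by auto
  from subsetD[OF aut[OF E.idempotent_unit_automorphism[OF e t t' tt']] imageI[OF x]]
  have "madd E x (msmult E (e x) t) \<in> \<iota>M" by simp
  then have "madd E (mneg E x) (madd E x (msmult E (e x) t)) \<in> \<iota>M"
    by (rule E.submodule_add[OF \<iota>M_submodule E.submodule_neg[OF \<iota>M_submodule x]])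
  then have "msmult E (e x) t \<in> \<iota>M" using xE eE tR by simp
  then have "msmult E (msmult E (e x) t) u \<in> \<iota>M" by (rule E.submodule_smult[OF \<iota>M_submodule _ u])
  moreover have "msmult E (msmult E (e x) t) u = e x"
    using eE tR u tu E.smult_assoc[of "e x" t u] by simp
  ultimately show "y \<in> \<iota>M" using y by simp
qed

lemma invariant_idempotent_decomposition:
  assumes e: "idempotent_endo R E e" and inv: "e ` \<iota>M \<subseteq> \<iota>M"
  defines "A \<equiv> {m \<in> mcarrier M. e (\<iota> m) = \<iota> m}" and "B \<equiv> {m \<in> mcarrier M. e (\<iota> m) = mzero E}"
  shows "rsubmodule R M A" "rsubmodule R M B" "A \<inter> B = {mzero M}"
    "{madd M a b | a b. a \<in> A \<and> b \<in> B} = mcarrier M"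
proof -
  have e_hom: "rhom R E E e" and idem: "\<And>x. x \<in> mcarrier E \<Longrightarrow> e (e x) = e x"
    using e unfolding idempotent_endo_def by auto
  interpret e: module_hom R E E e by (intro module_homI E.right_module e_hom)
  interpret fixed: module_hom R M E "\<lambda>m. madd E (e (\<iota> m)) (mneg E (\<iota> m))"
    by (intro module_homI M.right_module E.right_module rhom_diff rhom_comp[OF \<iota>.hom e_hom] \<iota>.hom)
  interpret killed: module_hom R M E "\<lambda>m. e (\<iota> m)"
    by (intro module_homI M.right_module E.right_module rhom_comp[OF \<iota>.hom e_hom])
  have "A = {m \<in> mcarrier M. madd E (e (\<iota> m)) (mneg E (\<iota> m)) = mzero E}"
    unfolding A_def using E.diff_eq_zero_iff by auto
  then show A: "rsubmodule R M A" using fixed.kernel_submodule by simp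
  show B: "rsubmodule R M B" unfolding B_def by (rule killed.kernel_submodule)
  show "A \<inter> B = {mzero M}"
  proof
    show "A \<inter> B \<subseteq> {mzero M}"
    proof
      fix m assume "m \<in> A \<inter> B"
      then have "m \<in> mcarrier M" "\<iota> m = mzero E" unfolding A_def B_def by auto
      then show "m \<in> {mzero M}" using \<iota>_eq_zero_iff by simp
    qed
    show "{mzero M} \<subseteq> A \<inter> B" using M.submodule_zero[OF A] M.submodule_zero[OF B] by blast
  qed
  show "{madd M a b | a b. a \<in> A \<and> b \<in> B} = mcarrier M"
  proof
    show "{madd M a b | a b. a \<in> A \<and> b \<in> B} \<subseteq> mcarrier M"
      using M.submodule_mem[OF A] M.submodule_mem[OF B] by blast
  next
    show "mcarrier M \<subseteq> {madd M a b | a b. a \<in> A \<and> b \<in> B}"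
    proof
      fix m assume m: "m \<in> mcarrier M"
      have "e (\<iota> m) \<in> \<iota>M" using subsetD[OF inv imageI[OF imageI[OF m]]] .
      then obtain a where a: "a \<in> mcarrier M" "\<iota> a = e (\<iota> m)" by (metis imageE)
      have "a \<in> A" unfolding A_def using a idem m by simp
      moreover have "madd M m (mneg M a) \<in> B"
        using a m idem unfolding B_def by (simp add: \<iota>.hom_diff e.hom_diff)
      moreover have "m = madd M a (madd M m (mneg M a))"
        using a m by (simp add: M.add_comm[of m])
      ultimately show "m \<in> {madd M a b | a b. a \<in> A \<and> b \<in> B}" by blast
    qed
  qed
qed

lemma indecomposable_idempotent_fixes_or_kills:
  assumes indec: "indecomposable R M" and e: "idempotent_endo R E e" and inv: "e ` \<iota>M \<subseteq> \<iota>M"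
  shows "(\<forall>m\<in>mcarrier M. e (\<iota> m) = \<iota> m \<longrightarrow> m = mzero M) \<or>
    (\<forall>m\<in>mcarrier M. e (\<iota> m) = mzero E \<longrightarrow> m = mzero M)"
proof -
  let ?A = "{m \<in> mcarrier M. e (\<iota> m) = \<iota> m}" and ?B = "{m \<in> mcarrier M. e (\<iota> m) = mzero E}"
  have "?A = {mzero M} \<or> ?B = {mzero M}"
    using indec unfolding indecomposable_def
    by (elim conjE allE[of _ ?A] allE[of _ ?B]) (use invariant_idempotent_decomposition[OF e inv] in simp)
  then show ?thesis
  proof
    assume "?A = {mzero M}"
    then have "\<forall>m\<in>mcarrier M. e (\<iota> m) = \<iota> m \<longrightarrow> m = mzero M" by blast
    then show ?thesis ..
  next
    assume "?B = {mzero M}"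
    then have "\<forall>m\<in>mcarrier M. e (\<iota> m) = mzero E \<longrightarrow> m = mzero M" by blast
    then show ?thesis ..
  qed
qed

lemma indecomposable_invariant_idempotent_trivial:
  assumes indec: "indecomposable R M" and e: "idempotent_endo R E e" and inv: "e ` \<iota>M \<subseteq> \<iota>M"
  shows "(\<forall>x\<in>mcarrier E. e x = mzero E) \<or> (\<forall>x\<in>mcarrier E. e x = x)"
proof -
  have e_hom: "rhom R E E e" and idem: "\<And>x. x \<in> mcarrier E \<Longrightarrow> e (e x) = e x"
    using e unfolding idempotent_endo_def by auto
  interpret e: module_hom R E E e by (intro module_homI E.right_module e_hom)
  have e_minus_id: "rhom R E E (\<lambda>x. madd E (e x) (mneg E x))"
    by (rule rhom_diff[OF E.right_module e_hom rhom_id])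
  consider "\<forall>m\<in>mcarrier M. e (\<iota> m) = \<iota> m \<longrightarrow> m = mzero M"
    | "\<forall>m\<in>mcarrier M. e (\<iota> m) = mzero E \<longrightarrow> m = mzero M"
    using indecomposable_idempotent_fixes_or_kills[OF indec e inv] by blast
  then show ?thesis
  proof cases
    case 1
    then have ker: "\<forall>x\<in>mcarrier E. madd E (e x) (mneg E x) = mzero E \<longrightarrow> x = mzero E"
      by (intro kernel_trivial_if_trivial_on_\<iota>M[OF e_minus_id]) (simp add: E.diff_eq_zero_iff)
    have "e x = mzero E" if "x \<in> mcarrier E" for x
      using ker[rule_format, of "e x"] idem[OF that] e.hom_closed[OF that] by simp
    then show ?thesis by blast
  next
    case 2
    then have ker: "\<forall>x\<in>mcarrier E. e x = mzero E \<longrightarrow> x = mzero E"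
      by (intro kernel_trivial_if_trivial_on_\<iota>M[OF e_hom]) simp
    have "e x = x" if "x \<in> mcarrier E" for x
      using ker[rule_format, of "madd E x (mneg E (e x))"] idem[OF that] e.hom_diff[of x "e x"]
        E.diff_eq_zero_iff[of x "e x"] e.hom_closed[OF that] that
      by simp
    then show ?thesis by blast
  qed
qed

lemma trivial_idempotents_endo_invariant:
  assumes triv: "trivial_idempotents R E" and aut: "\<And>\<sigma>. rautomorphism R E \<sigma> \<Longrightarrow> \<sigma> ` \<iota>M \<subseteq> \<iota>M"
    and h: "rhom R E E h"
  shows "h ` \<iota>M \<subseteq> \<iota>M"
  using trivial_idempotents_automorphism_or_complement[OF E_rinjective triv h]
proof
  assume "rautomorphism R E h"
  then show ?thesis by (rule aut)
next
  assume u_aut: "rautomorphism R E (\<lambda>x. madd E x (mneg E (h x)))"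
  show ?thesis
  proof
    fix z assume "z \<in> h ` \<iota>M"
    then obtain y where y: "z = h y" "y \<in> \<iota>M" by (rule imageE)
    have "madd E y (mneg E (h y)) \<in> \<iota>M"
      using subsetD[OF aut[OF u_aut] imageI[OF y(2)]] by simp
    then have "madd E y (mneg E (madd E y (mneg E (h y)))) \<in> \<iota>M"
      by (rule E.submodule_diff[OF \<iota>M_submodule y(2)])
    moreover have "y \<in> mcarrier E" by (rule E.submodule_mem[OF \<iota>M_submodule y(2)])
    then have "madd E y (mneg E (madd E y (mneg E (h y)))) = h y"
      using h by (simp add: E.neg_add_distrib rhom_def Pi_iff)
    ultimately show "z \<in> \<iota>M" using y by simp
  qed
qed

theorem aut_invariant_quasi_injective:
  assumes indec: "indecomposable R M" and aut: "\<And>\<sigma>. rautomorphism R E \<sigma> \<Longrightarrow> \<sigma> ` \<iota>M \<subseteq> \<iota>M"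
    and t: "central R t" and t': "central R t'" and tt': "t \<oplus>\<^bsub>R\<^esub> t' \<oplus>\<^bsub>R\<^esub> t \<otimes>\<^bsub>R\<^esub> t' = \<zero>\<^bsub>R\<^esub>"
    and u: "u \<in> carrier R" and tu: "t \<otimes>\<^bsub>R\<^esub> u = \<one>\<^bsub>R\<^esub>"
  shows "quasi_injective R M"
proof -
  have "trivial_idempotents R E"
    unfolding trivial_idempotents_def
  proof (intro allI impI)
    fix e assume e: "idempotent_endo R E e"
    show "(\<forall>x\<in>mcarrier E. e x = mzero E) \<or> (\<forall>x\<in>mcarrier E. e x = x)"
      by (rule indecomposable_invariant_idempotent_trivial[OF indec e
            aut_invariant_idempotent_invariant[OF aut t t' tt' u tu e]])
  qed
  then show ?thesis
    by (rule endo_invariant_quasi_injective[OF trivial_idempotents_endo_invariant[OF _ aut]])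
qed

end

text \<open>With \<open>l \<noteq> \<zero>, \<one>\<close> in \<open>F\<close>, the scalars \<open>t = l - \<one>\<close> and \<open>t' = l\<^sup>-\<^sup>1 - \<one>\<close> satisfy
  \<open>(\<one> + t)(\<one> + t') = \<one>\<close>, and \<open>t\<close> is invertible.\<close>

lemma algebra_central_scalars:
  assumes alg: "is_algebra_over F R \<phi>" and l: "l \<in> carrier F" "l \<noteq> \<zero>\<^bsub>F\<^esub>" "l \<noteq> \<one>\<^bsub>F\<^esub>"
  obtains t t' u where "central R t" "central R t'" "t \<oplus>\<^bsub>R\<^esub> t' \<oplus>\<^bsub>R\<^esub> t \<otimes>\<^bsub>R\<^esub> t' = \<zero>\<^bsub>R\<^esub>"
    "u \<in> carrier R" "t \<otimes>\<^bsub>R\<^esub> u = \<one>\<^bsub>R\<^esub>"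
proof -
  interpret F: field F using alg by (simp add: is_algebra_over_def)
  interpret R: ring R using alg by (simp add: is_algebra_over_def)
  have hom: "\<phi> \<in> ring_hom F R" using alg by (simp add: is_algebra_over_def)
  have central: "central R (\<phi> a)" if "a \<in> carrier F" for a
    using alg that ring_hom_closed[OF hom] unfolding is_algebra_over_def central_def by auto
  define a where "a = l \<ominus>\<^bsub>F\<^esub> \<one>\<^bsub>F\<^esub>"
  define b where "b = inv\<^bsub>F\<^esub> l \<ominus>\<^bsub>F\<^esub> \<one>\<^bsub>F\<^esub>"
  have l_inv: "inv\<^bsub>F\<^esub> l \<in> carrier F" "l \<otimes>\<^bsub>F\<^esub> inv\<^bsub>F\<^esub> l = \<one>\<^bsub>F\<^esub>"
    using l F.field_Units by auto
  have ab: "a \<in> carrier F" "b \<in> carrier F" using a_def b_def l l_inv by auto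
  have "l = a \<oplus>\<^bsub>F\<^esub> \<one>\<^bsub>F\<^esub>" unfolding a_def using l by algebra
  then have "a \<noteq> \<zero>\<^bsub>F\<^esub>" using l by auto
  then have a_inv: "inv\<^bsub>F\<^esub> a \<in> carrier F" "a \<otimes>\<^bsub>F\<^esub> inv\<^bsub>F\<^esub> a = \<one>\<^bsub>F\<^esub>"
    using ab F.field_Units by auto
  have "a \<oplus>\<^bsub>F\<^esub> b \<oplus>\<^bsub>F\<^esub> a \<otimes>\<^bsub>F\<^esub> b = l \<otimes>\<^bsub>F\<^esub> inv\<^bsub>F\<^esub> l \<ominus>\<^bsub>F\<^esub> \<one>\<^bsub>F\<^esub>"
    unfolding a_def b_def using l l_inv by algebra
  then have ab_zero: "a \<oplus>\<^bsub>F\<^esub> b \<oplus>\<^bsub>F\<^esub> a \<otimes>\<^bsub>F\<^esub> b = \<zero>\<^bsub>F\<^esub>"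
    using l_inv by (simp add: F.minus_eq F.r_neg)
  have "\<phi> a \<oplus>\<^bsub>R\<^esub> \<phi> b \<oplus>\<^bsub>R\<^esub> \<phi> a \<otimes>\<^bsub>R\<^esub> \<phi> b = \<phi> (a \<oplus>\<^bsub>F\<^esub> b \<oplus>\<^bsub>F\<^esub> a \<otimes>\<^bsub>F\<^esub> b)"
    using ab hom by (simp add: ring_hom_add ring_hom_mult)
  also have "\<dots> = \<zero>\<^bsub>R\<^esub>"
    using ab_zero ring_hom_zero[OF hom F.ring_axioms R.ring_axioms] by simp
  finally have "\<phi> a \<oplus>\<^bsub>R\<^esub> \<phi> b \<oplus>\<^bsub>R\<^esub> \<phi> a \<otimes>\<^bsub>R\<^esub> \<phi> b = \<zero>\<^bsub>R\<^esub>" .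
  moreover have "\<phi> a \<otimes>\<^bsub>R\<^esub> \<phi> (inv\<^bsub>F\<^esub> a) = \<one>\<^bsub>R\<^esub>"
    using ab a_inv ring_hom_mult[OF hom] ring_hom_one[OF hom] by metis
  ultimately show ?thesis
    using that central ab a_inv ring_hom_closed[OF hom] by blast
qed

theorem corollary6:
  fixes F :: "'f ring" and R :: "'r ring" and \<phi> :: "'f \<Rightarrow> 'r"
  assumes alg: "is_algebra_over F R \<phi>"
    and three: "\<exists>a\<in>carrier F. \<exists>b\<in>carrier F. \<exists>c\<in>carrier F. a \<noteq> b \<and> a \<noteq> c \<and> b \<noteq> c"
    and hulls: "\<forall>M :: ('r, 'm) rmod. right_module R M \<and> indecomposable R M \<longrightarrow>
                  (\<exists>(E :: ('r, 'e) rmod) \<iota>. injective_hull R M E \<iota>)"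
  shows "right_invariant_module_type R TYPE('m) \<longleftrightarrow>
         (\<forall>M :: ('r, 'm) rmod. right_module R M \<and> indecomposable R M \<longrightarrow>
              aut_invariant R M TYPE('e))"
proof -
  obtain l where "l \<in> carrier F" "l \<noteq> \<zero>\<^bsub>F\<^esub>" "l \<noteq> \<one>\<^bsub>F\<^esub>" using three by metis
  then obtain t t' u where scalars: "central R t" "central R t'"
    "t \<oplus>\<^bsub>R\<^esub> t' \<oplus>\<^bsub>R\<^esub> t \<otimes>\<^bsub>R\<^esub> t' = \<zero>\<^bsub>R\<^esub>" "u \<in> carrier R" "t \<otimes>\<^bsub>R\<^esub> u = \<one>\<^bsub>R\<^esub>"
    using algebra_central_scalars[OF alg] by blast
  have "quasi_injective R M \<longleftrightarrow> aut_invariant R M TYPE('e)"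
    if M: "right_module R M" "indecomposable R M" for M :: "('r, 'm) rmod"
  proof
    assume "quasi_injective R M"
    then show "aut_invariant R M TYPE('e)"
      unfolding aut_invariant_def rautomorphism_def
      using module_hull.quasi_injective_endo_invariant module_hull.intro by blast
  next
    assume ai: "aut_invariant R M TYPE('e)"
    obtain E :: "('r, 'e) rmod" and \<iota> where hull: "injective_hull R M E \<iota>" using hulls M by blast
    interpret module_hull R M E \<iota> by (rule module_hull.intro[OF hull])
    show "quasi_injective R M"
      by (rule aut_invariant_quasi_injective[OF M(2) _ scalars])
        (use ai hull in \<open>auto simp: aut_invariant_def\<close>)
  qed
  then show ?thesis unfolding right_invariant_module_type_def by blast
qed

end
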